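(* Let $I\subset\mathbb R$ be a compact interval containing $0$ in its interior and consider the planar slow-fast system $$\dot x=\epsilon f(x,y,\epsilon),\qquad \dot y=y\,h(x,y,\epsilon),$$ with $f,h$ $C^\infty$-smooth, $\epsilon\ge 0$ small. Assume $x\,h(x,0,0)<0$ for all $x\in I\setminus\{0\}$ and $\frac{\partial h}{\partial x}(0,0,0)<0$. Then there exists a smooth $\epsilon$-family of coordinate changes which, in a neighbourhood of $I\times\{0\}\subset\mathbb R^2$ and up to multiplication of the vector field by a smooth positive function, brings the system into the form $$\dot x=\epsilon f_0(x,\epsilon)+y\,g_0(x,y,\epsilon),\qquad \dot y=-xy,$$ for some smooth functions $f_0,g_0$ with $g_0(0,0,0)=0$.
   Context: All functions are $C^\infty$. "Smooth $\epsilon$-family of coordinate changes" means a diffeomorphism in $(x,y)$ depending smoothly on the parameter $\epsilon$ for $\epsilon\ge0$ small. *)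

theory Defs
  imports "HOL-Analysis.Analysis"
begin

fun pdiff :: "'a::real_normed_vector list \<Rightarrow> ('a \<Rightarrow> real) \<Rightarrow> 'a \<Rightarrow> real" where
  "pdiff [] f = f"
| "pdiff (b # bs) f = (\<lambda>x. deriv (\<lambda>t. pdiff bs f (x + t *\<^sub>R b)) 0)"

definition smooth_on :: "'a::euclidean_space set \<Rightarrow> ('a \<Rightarrow> real) \<Rightarrow> bool" where
  "smooth_on S f \<longleftrightarrow> open S \<and>
     (\<forall>bs. set bs \<subseteq> Basis \<longrightarrow>
        continuous_on S (pdiff bs f) \<and>
        (\<forall>b\<in>Basis. \<forall>x\<in>S.
           ((\<lambda>t. pdiff bs f (x + t *\<^sub>R b)) has_real_derivative pdiff (b # bs) f x) (at 0)))"

definition smooth_map_on :: "'a::euclidean_space set \<Rightarrow> ('a \<Rightarrow> 'b::euclidean_space) \<Rightarrow> bool" where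
  "smooth_map_on S F \<longleftrightarrow> (\<forall>i\<in>Basis. smooth_on S (\<lambda>x. F x \<bullet> i))"

definition diffeo_on :: "'a::euclidean_space set \<Rightarrow> ('a \<Rightarrow> 'a) \<Rightarrow> bool" where
  "diffeo_on U \<Psi> \<longleftrightarrow> open U \<and> inj_on \<Psi> U \<and> open (\<Psi> ` U) \<and>
     smooth_map_on U \<Psi> \<and> smooth_map_on (\<Psi> ` U) (inv_into U \<Psi>)"

end

theory Submission
  imports Defs
begin

text \<open>
  The new first coordinate is X = - h (x, y, e) (1 + x^2)^N, while y is kept. Near x = 0 the
  condition h_x (0, 0, 0) < 0 makes dX/dx positive on [a, b] x 0 x 0, and away from 0 the term
  - x h (x, 0, 0) > 0 does so once N is large. Hence (x, y, e) maps to (X, y, e) with a smooth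
  inverse x = xi (X, y, e) near the segment. Multiplying the vector field by (1 + x^2)^N turns
  y' = y h into Y' = - X Y, and X' into e F + y G, where F and G become smooth functions of
  (X, Y, e) after substituting x = xi (X, Y, e). Hadamard's lemma
  F (X, Y, e) = F (X, 0, e) + Y Q (X, Y, e) gives f0 = F (X, 0, e) and g0 = G + e Q, and g0 vanishes
  at the origin because h vanishes where X does.
\<close>

section \<open>Functions of class C^k\<close>

text \<open>The recursive form of \<open>smooth_on\<close> truncated at order k: closure properties of smooth
  functions are proved by induction on k.\<close>

fun Ck :: "nat \<Rightarrow> 'a::euclidean_space set \<Rightarrow> ('a \<Rightarrow> real) \<Rightarrow> bool" where
  "Ck 0 S f \<longleftrightarrow> open S \<and> continuous_on S f"
| "Ck (Suc k) S f \<longleftrightarrow> open S \<and> continuous_on S f \<and>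
     (\<forall>b\<in>Basis. \<forall>x\<in>S. ((\<lambda>t. f (x + t *\<^sub>R b)) has_real_derivative pdiff [b] f x) (at 0)) \<and>
     (\<forall>b\<in>Basis. Ck k S (pdiff [b] f))"

lemma pdiff_append: "pdiff (bs @ cs) f = pdiff bs (pdiff cs f)"
  by (induction bs) auto

lemma all_lists_length_less_Suc:
  "(\<forall>bs. set bs \<subseteq> B \<and> length bs < Suc n \<longrightarrow> Q bs) \<longleftrightarrow>
     Q [] \<and> (\<forall>b\<in>B. \<forall>bs. set bs \<subseteq> B \<and> length bs < n \<longrightarrow> Q (bs @ [b]))"
proof (intro iffI conjI ballI allI impI)
  assume Q: "\<forall>bs. set bs \<subseteq> B \<and> length bs < Suc n \<longrightarrow> Q bs"
  show "Q []" using Q by simp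
  show "Q (bs @ [b])" if "b \<in> B" "set bs \<subseteq> B \<and> length bs < n" for b bs
    using Q that by simp
next
  fix bs assume Q: "Q [] \<and> (\<forall>b\<in>B. \<forall>bs. set bs \<subseteq> B \<and> length bs < n \<longrightarrow> Q (bs @ [b]))"
    and bs: "set bs \<subseteq> B \<and> length bs < Suc n"
  show "Q bs"
    using bs Q by (cases bs rule: rev_cases) auto
qed

lemma Ck_iff_pdiff:
  "Ck k S f \<longleftrightarrow> open S \<and>
     (\<forall>bs. set bs \<subseteq> Basis \<and> length bs < Suc k \<longrightarrow> continuous_on S (pdiff bs f)) \<and>
     (\<forall>bs. set bs \<subseteq> Basis \<and> length bs < k \<longrightarrow>
        (\<forall>b\<in>Basis. \<forall>x\<in>S. ((\<lambda>t. pdiff bs f (x + t *\<^sub>R b)) has_real_derivative pdiff (b # bs) f x) (at 0)))"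
proof (induction k arbitrary: f)
  case 0
  then show ?case by auto
next
  case (Suc k)
  have "pdiff (c # bs @ [b]) f = pdiff (c # bs) (pdiff [b] f)" for c b bs
    by (simp add: pdiff_append flip: append_Cons)
  then show ?case
    unfolding Ck.simps Suc.IH all_lists_length_less_Suc[where n = "Suc k"] all_lists_length_less_Suc[where n = k]
    by (auto simp: pdiff_append)
qed

lemma smooth_on_iff_Ck: "smooth_on S f \<longleftrightarrow> (\<forall>k. Ck k S f)"
  unfolding smooth_on_def Ck_iff_pdiff by (meson lessI)

lemma Ck_open: "Ck k S f \<Longrightarrow> open S"
  by (cases k) auto

lemma Ck_continuous_on: "Ck k S f \<Longrightarrow> continuous_on S f"
  by (cases k) auto

lemma Ck_SucD: "Ck (Suc k) S f \<Longrightarrow> Ck k S f"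
  by (induction k arbitrary: f) auto

lemma eventually_line_in_open:
  fixes x b :: "'a::real_normed_vector"
  assumes "open S" "x \<in> S"
  shows "eventually (\<lambda>t. x + t *\<^sub>R b \<in> S) (nhds (0::real))"
proof -
  have "open ((\<lambda>t::real. x + t *\<^sub>R b) -` S)"
    by (rule open_vimage[OF assms(1)]) (intro continuous_intros)
  from eventually_nhds_in_open[OF this] show ?thesis
    using assms(2) by simp
qed

lemma pdiff_cong_open:
  assumes "open S" "\<And>y. y \<in> S \<Longrightarrow> f y = g y" "x \<in> S"
  shows "pdiff bs f x = pdiff bs g x"
  using assms(3)
proof (induction bs arbitrary: x)
  case Nil
  then show ?case using assms by simp
next
  case (Cons b bs)
  from eventually_line_in_open[OF assms(1) Cons.prems]
  have "eventually (\<lambda>t. pdiff bs f (x + t *\<^sub>R b) = pdiff bs g (x + t *\<^sub>R b)) (nhds 0)"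
    by eventually_elim (use Cons.IH in auto)
  then show ?case by (simp add: deriv_cong_ev)
qed

declare pdiff.simps(2) [simp del]

lemma Ck_cong:
  assumes "Ck k S f" "\<And>x. x \<in> S \<Longrightarrow> f x = g x"
  shows "Ck k S g"
  using assms
proof (induction k arbitrary: f g)
  case 0
  then show ?case by (simp cong: continuous_on_cong)
next
  case (Suc k)
  have S: "open S" using Suc.prems by simp
  have pd: "pdiff [b] f x = pdiff [b] g x" if "x \<in> S" for b x
    using pdiff_cong_open[OF S Suc.prems(2) that] .
  have "((\<lambda>t. g (x + t *\<^sub>R b)) has_real_derivative pdiff [b] g x) (at 0)"
    if "b \<in> Basis" "x \<in> S" for b x
  proof -
    from eventually_line_in_open[OF S that(2)]
    have "eventually (\<lambda>t. f (x + t *\<^sub>R b) = g (x + t *\<^sub>R b)) (nhds 0)"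
      by eventually_elim (use Suc.prems in auto)
    moreover have "((\<lambda>t. f (x + t *\<^sub>R b)) has_real_derivative pdiff [b] f x) (at 0)"
      using Suc.prems that by simp
    ultimately show ?thesis
      using DERIV_cong_ev pd[OF that(2)] by fastforce
  qed
  moreover have "Ck k S (pdiff [b] g)" if "b \<in> Basis" for b
    using Suc.IH[of "pdiff [b] f" "pdiff [b] g"] Suc.prems that pd by auto
  ultimately show ?case
    using S Suc.prems continuous_on_cong by (metis Ck.simps(2))
qed

lemma Ck_SucI:
  assumes "open S" "continuous_on S f"
    and "\<And>b x. b \<in> Basis \<Longrightarrow> x \<in> S \<Longrightarrow> ((\<lambda>t. f (x + t *\<^sub>R b)) has_real_derivative D b x) (at 0)"
    and "\<And>b. b \<in> Basis \<Longrightarrow> Ck k S (D b)"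
  shows "Ck (Suc k) S f"
proof -
  have pd: "D b x = pdiff [b] f x" if "b \<in> Basis" "x \<in> S" for b x
    using DERIV_imp_deriv[OF assms(3)[OF that]] by (simp add: pdiff.simps(2))
  show ?thesis
    using assms pd Ck_cong[OF assms(4)] by auto
qed

lemma Ck_const: "open S \<Longrightarrow> Ck k S (\<lambda>x. c)"
proof (induction k arbitrary: c)
  case (Suc k)
  then show ?case
    by (intro Ck_SucI[where D = "\<lambda>b x. 0"]) auto
qed simp

lemma Ck_linear:
  assumes "open S" "linear l"
  shows "Ck k S l"
proof (cases k)
  case 0
  then show ?thesis using assms by (simp add: linear_continuous_on linear_conv_bounded_linear)
next
  case (Suc m)
  have "((\<lambda>t. l (x + t *\<^sub>R b)) has_real_derivative l b) (at 0)" for x b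
    using assms(2) by (auto simp: linear_add linear_scale intro!: derivative_eq_intros)
  then show ?thesis
    unfolding Suc using assms by (intro Ck_SucI[where D = "\<lambda>b x. l b"] Ck_const)
      (auto simp: linear_continuous_on linear_conv_bounded_linear)
qed

lemma Ck_add:
  assumes "Ck k S f" "Ck k S g"
  shows "Ck k S (\<lambda>x. f x + g x)"
  using assms
proof (induction k arbitrary: f g)
  case (Suc k)
  show ?case
  proof (rule Ck_SucI[where D = "\<lambda>b x. pdiff [b] f x + pdiff [b] g x"])
    show "continuous_on S (\<lambda>x. f x + g x)"
      using Suc.prems by (auto intro!: continuous_intros dest: Ck_continuous_on)
  qed (use Suc in \<open>auto intro!: derivative_eq_intros\<close>)
qed (simp add: continuous_on_add)

lemma Ck_mult:
  assumes "Ck k S f" "Ck k S g"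
  shows "Ck k S (\<lambda>x. f x * g x)"
  using assms
proof (induction k arbitrary: f g)
  case (Suc k)
  show ?case
  proof (rule Ck_SucI[where D = "\<lambda>b x. pdiff [b] f x * g x + f x * pdiff [b] g x"])
    show "continuous_on S (\<lambda>x. f x * g x)"
      using Suc.prems by (auto intro!: continuous_intros dest: Ck_continuous_on)
    show "Ck k S (\<lambda>x. pdiff [b] f x * g x + f x * pdiff [b] g x)" if "b \<in> Basis" for b
    proof -
      have "Ck k S f" "Ck k S g" "Ck k S (pdiff [b] f)" "Ck k S (pdiff [b] g)"
        using Suc.prems Ck_SucD that by auto
      then show ?thesis by (intro Ck_add Suc.IH)
    qed
  qed (use Suc in \<open>auto intro!: derivative_eq_intros\<close>)
qed (simp add: continuous_on_mult)

lemma Ck_sum: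
  assumes "finite I" "open S" "\<And>i. i \<in> I \<Longrightarrow> Ck k S (F i)"
  shows "Ck k S (\<lambda>x. \<Sum>i\<in>I. F i x)"
  using assms by (induction I rule: finite_induct) (auto intro!: Ck_add Ck_const)

section \<open>Continuous partial derivatives and the chain rule\<close>

lemma has_real_derivative_line_shift:
  fixes f :: "'a::real_vector \<Rightarrow> real"
  assumes "((\<lambda>\<tau>. f ((z + t *\<^sub>R c) + \<tau> *\<^sub>R c)) has_real_derivative D) (at 0)"
  shows "((\<lambda>\<tau>. f (z + \<tau> *\<^sub>R c)) has_real_derivative D) (at t)"
proof -
  have "(\<lambda>\<tau>. f (z + (\<tau> + t) *\<^sub>R c)) = (\<lambda>\<tau>. f ((z + t *\<^sub>R c) + \<tau> *\<^sub>R c))"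
    by (rule ext) (simp add: algebra_simps)
  with assms show ?thesis
    using DERIV_shift[of "\<lambda>\<tau>. f (z + \<tau> *\<^sub>R c)" D 0 t] by simp
qed

lemma norm_sum_Basis_le:
  assumes "B \<subseteq> Basis"
  shows "norm (\<Sum>b\<in>B. (v \<bullet> b) *\<^sub>R b) \<le> card B * norm v"
proof -
  have "norm ((v \<bullet> b) *\<^sub>R b) \<le> norm v" if "b \<in> B" for b
    using that assms Basis_le_norm by (auto simp: subset_iff)
  then show ?thesis
    using sum_norm_le[of B "\<lambda>b. (v \<bullet> b) *\<^sub>R b" "\<lambda>_. norm v"] by simp
qed

lemma line_increment_bound:
  fixes f :: "'a::real_normed_vector \<Rightarrow> real"
  assumes "\<And>t. t \<in> closed_segment 0 s \<Longrightarrow> ((\<lambda>\<tau>. f (z + \<tau> *\<^sub>R c)) has_real_derivative D t) (at t)"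
    and "\<And>t. t \<in> closed_segment 0 s \<Longrightarrow> \<bar>D t - d\<bar> \<le> e"
  shows "\<bar>f (z + s *\<^sub>R c) - f z - s * d\<bar> \<le> e * \<bar>s\<bar>"
proof -
  define \<psi> where "\<psi> t = f (z + t *\<^sub>R c) - t * d" for t
  have "(\<psi> has_real_derivative D t - d) (at t)" if "t \<in> closed_segment 0 s" for t
    unfolding \<psi>_def using assms(1)[OF that] by (auto intro!: derivative_eq_intros)
  then have "norm (\<psi> s - \<psi> 0) \<le> e * norm (s - 0)"
    using assms(2) by (intro field_differentiable_bound[of "closed_segment 0 s"])
      (auto intro: has_field_derivative_at_within)
  then show ?thesis by (simp add: \<psi>_def)
qed

text \<open>Moving along the coordinate directions one at a time, each step is controlled by the mean
  value theorem.\<close>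

lemma partials_increment_bound:
  fixes f :: "'a::euclidean_space \<Rightarrow> real" and e r :: real
  assumes D: "\<And>b y. b \<in> Basis \<Longrightarrow> y \<in> ball x r \<Longrightarrow> ((\<lambda>t. f (y + t *\<^sub>R b)) has_real_derivative D b y) (at 0)"
    and near: "\<And>b y. b \<in> Basis \<Longrightarrow> y \<in> ball x r \<Longrightarrow> \<bar>D b y - D b x\<bar> \<le> e"
    and B: "B \<subseteq> Basis" and v: "DIM('a) * norm v < r"
  shows "\<bar>f (x + (\<Sum>b\<in>B. (v \<bullet> b) *\<^sub>R b)) - f x - (\<Sum>b\<in>B. (v \<bullet> b) * D b x)\<bar> \<le> card B * e * norm v"
proof -
  have "r > 0"
    using v by (metis le_less_trans mult_nonneg_nonneg norm_ge_zero of_nat_0_le_iff)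
  have "finite B" using B finite_subset finite_Basis by blast
  then show ?thesis using B
  proof (induction B rule: finite_induct)
    case (insert c B)
    define w where "w = (\<Sum>b\<in>B. (v \<bullet> b) *\<^sub>R b)"
    define s where "s = v \<bullet> c"
    have c: "c \<in> Basis" and "B \<subseteq> Basis" using insert by auto
    have nw: "norm w \<le> card B * norm v"
      unfolding w_def using \<open>B \<subseteq> Basis\<close> by (rule norm_sum_Basis_le)
    have "card (insert c B) \<le> DIM('a)" using insert by (intro card_mono) auto
    then have "card B + 1 \<le> DIM('a)" using insert by simp
    have on_ball: "x + w + t *\<^sub>R c \<in> ball x r" if "t \<in> closed_segment 0 s" for t
    proof -
      have "\<bar>t\<bar> \<le> norm v"
        using that Basis_le_norm[OF c, of v] by (auto simp: s_def closed_segment_eq_real_ivl split: if_splits)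
      then have "norm (w + t *\<^sub>R c) \<le> (card B + 1) * norm v"
        using norm_triangle_ineq[of w "t *\<^sub>R c"] nw c by (simp add: algebra_simps)
      also have "\<dots> \<le> DIM('a) * norm v"
        using \<open>card B + 1 \<le> DIM('a)\<close> by (intro mult_right_mono) auto
      finally have "norm (w + t *\<^sub>R c) < r" using v by simp
      moreover have "dist x (x + w + t *\<^sub>R c) = norm (w + t *\<^sub>R c)"
        by (metis add.assoc add_diff_cancel_left' dist_commute dist_norm)
      ultimately show ?thesis by simp
    qed
    have "\<bar>f (x + w + s *\<^sub>R c) - f (x + w) - s * D c x\<bar> \<le> e * \<bar>s\<bar>"
    proof (rule line_increment_bound)
      fix t assume t: "t \<in> closed_segment 0 s"
      show "((\<lambda>\<tau>. f (x + w + \<tau> *\<^sub>R c)) has_real_derivative D c (x + w + t *\<^sub>R c)) (at t)"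
        using D[OF c on_ball[OF t]] by (rule has_real_derivative_line_shift)
      show "\<bar>D c (x + w + t *\<^sub>R c) - D c x\<bar> \<le> e" using near[OF c on_ball[OF t]] .
    qed
    also have "e * \<bar>s\<bar> \<le> e * norm v"
      using Basis_le_norm[OF c] near[OF c, of x] \<open>r > 0\<close> by (intro mult_left_mono) (auto simp: s_def)
    finally have "\<bar>f (x + w + s *\<^sub>R c) - f (x + w) - s * D c x\<bar> \<le> e * norm v" .
    moreover have "\<bar>f (x + w) - f x - (\<Sum>b\<in>B. (v \<bullet> b) * D b x)\<bar> \<le> card B * e * norm v"
      using insert by (simp add: w_def)
    ultimately show ?case
      using insert by (simp add: w_def s_def algebra_simps)
  qed simp
qed

lemma partials_has_derivative:
  fixes f :: "'a::euclidean_space \<Rightarrow> real"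
  assumes S: "open S" "x \<in> S"
    and D: "\<And>b y. b \<in> Basis \<Longrightarrow> y \<in> S \<Longrightarrow> ((\<lambda>t. f (y + t *\<^sub>R b)) has_real_derivative D b y) (at 0)"
    and cont: "\<And>b. b \<in> Basis \<Longrightarrow> continuous (at x) (D b)"
  shows "(f has_derivative (\<lambda>v. \<Sum>b\<in>Basis. (v \<bullet> b) * D b x)) (at x)"
  unfolding has_derivative_at_alt
proof (intro conjI allI impI)
  show "bounded_linear (\<lambda>v. \<Sum>b\<in>Basis. (v \<bullet> b) * D b x)"
    by (intro bounded_linear_sum) (auto intro!: bounded_linear_intros)
next
  fix e :: real assume "e > 0"
  define n where "n = real DIM('a)"
  have n: "n > 0" by (simp add: n_def)
  have "(D b \<longlongrightarrow> D b x) (nhds x)" if "b \<in> Basis" for b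
    using cont[OF that] by (simp add: tendsto_nhds_iff continuous_at)
  then have "eventually (\<lambda>y. y \<in> S \<and> (\<forall>b\<in>Basis. dist (D b y) (D b x) < e / n)) (nhds x)"
    using \<open>e > 0\<close> n S
    by (intro eventually_conj eventually_nhds_in_open eventually_ball_finite) (auto simp: tendsto_iff)
  then obtain r where r: "r > 0" "\<And>y. y \<in> ball x r \<Longrightarrow> y \<in> S \<and> (\<forall>b\<in>Basis. \<bar>D b y - D b x\<bar> < e / n)"
    unfolding eventually_nhds_metric by (auto simp: dist_real_def dist_commute)
  show "\<exists>d>0. \<forall>y. norm (y - x) < d \<longrightarrow>
      norm (f y - f x - (\<Sum>b\<in>Basis. ((y - x) \<bullet> b) * D b x)) \<le> e * norm (y - x)"
  proof (intro exI conjI allI impI)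
    show "r / n > 0" using r n by simp
    fix y assume "norm (y - x) < r / n"
    then have y: "DIM('a) * norm (y - x) < r" using n by (simp add: n_def field_simps)
    have "\<bar>f (x + (\<Sum>b\<in>Basis. ((y - x) \<bullet> b) *\<^sub>R b)) - f x - (\<Sum>b\<in>Basis. ((y - x) \<bullet> b) * D b x)\<bar>
        \<le> card (Basis :: 'a set) * (e / n) * norm (y - x)"
    proof (rule partials_increment_bound)
      show "((\<lambda>t. f (z + t *\<^sub>R b)) has_real_derivative D b z) (at 0)" if "b \<in> Basis" "z \<in> ball x r" for b z
        using D r(2) that by blast
      show "\<bar>D b z - D b x\<bar> \<le> e / n" if "b \<in> Basis" "z \<in> ball x r" for b z
        using r(2) that by (blast intro: less_imp_le)
    qed (use y in simp_all)
    then show "norm (f y - f x - (\<Sum>b\<in>Basis. ((y - x) \<bullet> b) * D b x)) \<le> e * norm (y - x)"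
      using n by (simp add: euclidean_representation n_def)
  qed
qed

lemma Ck_has_derivative:
  assumes "Ck (Suc k) S f" "x \<in> S"
  shows "(f has_derivative (\<lambda>v. \<Sum>b\<in>Basis. (v \<bullet> b) * pdiff [b] f x)) (at x)"
proof (rule partials_has_derivative)
  show "open S" using assms(1) by simp
  show "continuous (at x) (pdiff [b] f)" if "b \<in> Basis" for b
    using assms that Ck_continuous_on continuous_on_eq_continuous_at by fastforce
qed (use assms in \<open>auto\<close>)

lemma has_real_derivative_compose_line:
  fixes f :: "'b::euclidean_space \<Rightarrow> real" and G :: "'a::real_normed_vector \<Rightarrow> 'b"
  assumes f: "(f has_derivative (\<lambda>v. \<Sum>b\<in>Basis. (v \<bullet> b) * Df b)) (at (G x))"
    and G: "\<And>i. i \<in> Basis \<Longrightarrow> ((\<lambda>t. G (x + t *\<^sub>R c) \<bullet> i) has_real_derivative DG i) (at 0)"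
  shows "((\<lambda>t. f (G (x + t *\<^sub>R c))) has_real_derivative (\<Sum>b\<in>Basis. Df b * DG b)) (at 0)"
proof -
  define V where "V = (\<Sum>i\<in>Basis. DG i *\<^sub>R i)"
  have "(\<lambda>t. G (x + t *\<^sub>R c)) = (\<lambda>t. \<Sum>i\<in>Basis. (G (x + t *\<^sub>R c) \<bullet> i) *\<^sub>R i)"
    by (simp add: euclidean_representation)
  then have "((\<lambda>t. G (x + t *\<^sub>R c)) has_vector_derivative V) (at 0)"
    unfolding V_def using G
    by (auto intro!: has_vector_derivative_sum derivative_eq_intros
        simp: has_real_derivative_iff_has_vector_derivative[symmetric])
  moreover have "(f has_derivative (\<lambda>v. \<Sum>b\<in>Basis. (v \<bullet> b) * Df b)) (at (G (x + 0 *\<^sub>R c)))"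
    using f by simp
  ultimately have "(f \<circ> (\<lambda>t. G (x + t *\<^sub>R c)) has_derivative
      (\<lambda>v. \<Sum>b\<in>Basis. (v \<bullet> b) * Df b) \<circ> (\<lambda>t. t *\<^sub>R V)) (at 0)"
    unfolding has_vector_derivative_def by (rule diff_chain_at)
  moreover have "V \<bullet> b = DG b" if "b \<in> Basis" for b
    unfolding V_def using that by (simp add: inner_sum_left inner_Basis if_distrib cong: if_cong)
  then have "(\<lambda>v. \<Sum>b\<in>Basis. (v \<bullet> b) * Df b) \<circ> (\<lambda>t. t *\<^sub>R V) = (*) (\<Sum>b\<in>Basis. Df b * DG b)"
    by (auto simp: fun_eq_iff sum_distrib_left mult_ac intro!: sum.cong)
  ultimately show ?thesis
    by (simp add: has_field_derivative_def o_def)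
qed

lemma Ck_compose:
  fixes f :: "'b::euclidean_space \<Rightarrow> real" and G :: "'a::euclidean_space \<Rightarrow> 'b"
  assumes "Ck k S f" "\<And>i. i \<in> Basis \<Longrightarrow> Ck k T (\<lambda>x. G x \<bullet> i)" "G ` T \<subseteq> S" "open T"
  shows "Ck k T (\<lambda>x. f (G x))"
  using assms(1,2,3)
proof (induction k arbitrary: f G)
  case 0
  then have "continuous_on T G"
    by (intro continuous_on_componentwise[THEN iffD2]) simp
  then show ?case
    using 0 assms(4) continuous_on_compose2[of S f T G] by simp
next
  case (Suc k)
  have "continuous_on T G"
    using Suc.prems by (intro continuous_on_componentwise[THEN iffD2]) (auto dest: Ck_continuous_on)
  show ?case
  proof (rule Ck_SucI[where D = "\<lambda>c x. \<Sum>b\<in>Basis. pdiff [b] f (G x) * pdiff [c] (\<lambda>x. G x \<bullet> b) x"])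
    show "continuous_on T (\<lambda>x. f (G x))"
      using Suc.prems \<open>continuous_on T G\<close> continuous_on_compose2[of S f T G]
      by (auto dest: Ck_continuous_on)
    show "((\<lambda>t. f (G (x + t *\<^sub>R c))) has_real_derivative
        (\<Sum>b\<in>Basis. pdiff [b] f (G x) * pdiff [c] (\<lambda>x. G x \<bullet> b) x)) (at 0)"
      if "c \<in> Basis" "x \<in> T" for c x
    proof (rule has_real_derivative_compose_line)
      show "(f has_derivative (\<lambda>v. \<Sum>b\<in>Basis. (v \<bullet> b) * pdiff [b] f (G x))) (at (G x))"
        using Suc.prems(3) that(2) by (intro Ck_has_derivative[OF Suc.prems(1)]) auto
      show "((\<lambda>t. G (x + t *\<^sub>R c) \<bullet> i) has_real_derivative pdiff [c] (\<lambda>x. G x \<bullet> i) x) (at 0)"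
        if "i \<in> Basis" for i
        using Suc.prems(2)[OF that] \<open>c \<in> Basis\<close> \<open>x \<in> T\<close> unfolding Ck.simps(2) by blast
    qed
    show "Ck k T (\<lambda>x. \<Sum>b\<in>Basis. pdiff [b] f (G x) * pdiff [c] (\<lambda>x. G x \<bullet> b) x)"
      if "c \<in> Basis" for c
    proof (rule Ck_sum[OF finite_Basis assms(4)])
      fix b :: 'b assume b: "b \<in> Basis"
      have "\<And>i. i \<in> Basis \<Longrightarrow> Ck k T (\<lambda>x. G x \<bullet> i)"
        using Suc.prems(2) Ck_SucD by blast
      moreover have "Ck k S (pdiff [b] f)"
        using Suc.prems(1) b unfolding Ck.simps(2) by blast
      ultimately have "Ck k T (\<lambda>x. pdiff [b] f (G x))"
        using Suc.IH Suc.prems(3) by blast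
      moreover have "Ck k T (pdiff [c] (\<lambda>x. G x \<bullet> b))"
        using Suc.prems(2)[OF b] that unfolding Ck.simps(2) by blast
      ultimately show "Ck k T (\<lambda>x. pdiff [b] f (G x) * pdiff [c] (\<lambda>x. G x \<bullet> b) x)"
        by (rule Ck_mult)
    qed
  qed (use assms(4) in simp)
qed

lemma Ck_inverse:
  fixes g :: "'a::euclidean_space \<Rightarrow> real"
  assumes "Ck k S g" "\<And>x. x \<in> S \<Longrightarrow> g x \<noteq> 0"
  shows "Ck k S (\<lambda>x. inverse (g x))"
proof (rule Ck_compose[where f = inverse and S = "- {0}" and G = g])
  show "Ck k (- {0}) (inverse :: real \<Rightarrow> real)"
  proof (induction k)
    case (Suc k)
    have "Ck k (- {0}) (\<lambda>y::real. - 1 * (inverse y * inverse y))"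
      by (intro Ck_mult Ck_const Suc) auto
    then show ?case
      by (intro Ck_SucI[where D = "\<lambda>b y. - 1 * (inverse y * inverse y)"])
        (auto intro!: derivative_eq_intros simp: continuous_on_inverse)
  qed (simp add: open_Compl continuous_on_inverse)
qed (use assms in \<open>auto dest: Ck_open\<close>)

lemma smooth_on_open: "smooth_on S f \<Longrightarrow> open S"
  by (simp add: smooth_on_def)

lemma smooth_on_continuous_on: "smooth_on S f \<Longrightarrow> continuous_on S f"
  using Ck_continuous_on smooth_on_iff_Ck by blast

lemma smooth_on_imp_Ck:
  assumes "smooth_on S f"
  shows "Ck k S f"
  using assms smooth_on_iff_Ck by blast

lemma smooth_on_has_pdiff:
  "smooth_on S f \<Longrightarrow> b \<in> Basis \<Longrightarrow> x \<in> S \<Longrightarrow>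
    ((\<lambda>t. f (x + t *\<^sub>R b)) has_real_derivative pdiff [b] f x) (at 0)"
  using smooth_on_imp_Ck[of S f "Suc 0"] unfolding Ck.simps(2) by blast

lemma smooth_on_pdiff:
  assumes "smooth_on S f" "b \<in> Basis"
  shows "smooth_on S (pdiff [b] f)"
  unfolding smooth_on_iff_Ck
proof
  fix k
  show "Ck k S (pdiff [b] f)"
    using smooth_on_imp_Ck[OF assms(1), of "Suc k"] assms(2) unfolding Ck.simps(2) by blast
qed

lemma smooth_on_has_derivative:
  "smooth_on S f \<Longrightarrow> x \<in> S \<Longrightarrow> (f has_derivative (\<lambda>v. \<Sum>b\<in>Basis. (v \<bullet> b) * pdiff [b] f x)) (at x)"
  unfolding smooth_on_iff_Ck by (blast intro: Ck_has_derivative)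

lemma smooth_on_subset: "smooth_on S f \<Longrightarrow> T \<subseteq> S \<Longrightarrow> open T \<Longrightarrow> smooth_on T f"
  unfolding smooth_on_def by (blast intro: continuous_on_subset)

lemma smooth_on_cong: "smooth_on S f \<Longrightarrow> (\<And>x. x \<in> S \<Longrightarrow> f x = g x) \<Longrightarrow> smooth_on S g"
  by (meson smooth_on_iff_Ck Ck_cong)

lemma smooth_on_const: "open S \<Longrightarrow> smooth_on S (\<lambda>x. c)"
  by (simp add: smooth_on_iff_Ck Ck_const)

lemma smooth_on_linear: "open S \<Longrightarrow> linear l \<Longrightarrow> smooth_on S l"
  by (simp add: smooth_on_iff_Ck Ck_linear)

lemma smooth_on_add: "smooth_on S f \<Longrightarrow> smooth_on S g \<Longrightarrow> smooth_on S (\<lambda>x. f x + g x)"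
  by (simp add: smooth_on_iff_Ck Ck_add)

lemma smooth_on_mult: "smooth_on S f \<Longrightarrow> smooth_on S g \<Longrightarrow> smooth_on S (\<lambda>x. f x * g x)"
  by (simp add: smooth_on_iff_Ck Ck_mult)

lemma smooth_on_uminus:
  assumes "smooth_on S f"
  shows "smooth_on S (\<lambda>x. - f x)"
  using smooth_on_mult[OF smooth_on_const[OF smooth_on_open[OF assms]] assms, of "- 1"] by simp

lemma smooth_on_diff: "smooth_on S f \<Longrightarrow> smooth_on S g \<Longrightarrow> smooth_on S (\<lambda>x. f x - g x)"
  using smooth_on_add[OF _ smooth_on_uminus] by fastforce

lemma smooth_on_power: "smooth_on S f \<Longrightarrow> smooth_on S (\<lambda>x. f x ^ n)"
  by (induction n) (auto intro: smooth_on_mult smooth_on_const smooth_on_open)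

lemma smooth_on_inverse:
  "smooth_on S g \<Longrightarrow> (\<And>x. x \<in> S \<Longrightarrow> g x \<noteq> 0) \<Longrightarrow> smooth_on S (\<lambda>x. inverse (g x))"
  by (simp add: smooth_on_iff_Ck Ck_inverse)

lemma smooth_on_divide:
  "smooth_on S f \<Longrightarrow> smooth_on S g \<Longrightarrow> (\<And>x. x \<in> S \<Longrightarrow> g x \<noteq> 0) \<Longrightarrow> smooth_on S (\<lambda>x. f x / g x)"
  by (simp add: divide_inverse smooth_on_mult smooth_on_inverse)

lemma smooth_map_on_real_iff: "smooth_map_on S (F :: 'a::euclidean_space \<Rightarrow> real) \<longleftrightarrow> smooth_on S F"
  by (simp add: smooth_map_on_def)

lemma smooth_map_on_Pair:
  "smooth_map_on S (\<lambda>x. (F x, G x)) \<longleftrightarrow> smooth_map_on S F \<and> smooth_map_on S G"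
  by (simp add: smooth_map_on_def Basis_prod_def ball_Un)

lemma smooth_map_on_open: "smooth_map_on S F \<Longrightarrow> open S"
  using nonempty_Basis smooth_on_open unfolding smooth_map_on_def by blast

lemma smooth_map_on_linear:
  assumes "open S" "linear L"
  shows "smooth_map_on S L"
  unfolding smooth_map_on_def
proof
  fix i :: 'b assume "i \<in> Basis"
  have "linear (\<lambda>x. L x \<bullet> i)" using assms(2) by (simp add: linear_iff inner_add_left)
  with assms(1) show "smooth_on S (\<lambda>x. L x \<bullet> i)" by (rule smooth_on_linear)
qed

lemma smooth_map_on_const: "open S \<Longrightarrow> smooth_map_on S (\<lambda>x. c)"
  by (simp add: smooth_map_on_def smooth_on_const)

lemma smooth_map_on_cong:
  "smooth_map_on S F \<Longrightarrow> (\<And>x. x \<in> S \<Longrightarrow> F x = G x) \<Longrightarrow> smooth_map_on S G"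
  unfolding smooth_map_on_def by (auto elim!: smooth_on_cong)

lemma smooth_on_compose:
  assumes "smooth_on S f" "smooth_map_on T G" "G ` T \<subseteq> S"
  shows "smooth_on T (\<lambda>x. f (G x))"
  using assms smooth_map_on_open[OF assms(2)] Ck_compose[of _ S f T G]
  unfolding smooth_on_iff_Ck smooth_map_on_def by blast

lemma smooth_on_has_real_derivative_line:
  assumes "smooth_on S f" "b \<in> Basis" "x + t *\<^sub>R b \<in> S"
  shows "((\<lambda>s. f (x + s *\<^sub>R b)) has_real_derivative pdiff [b] f (x + t *\<^sub>R b)) (at t)"
  using smooth_on_has_pdiff[OF assms] by (rule has_real_derivative_line_shift)

text \<open>Regularity bootstrap for functions whose partial derivatives are expressed through the
  function itself, such as an inverse function.\<close>

lemma smooth_on_bootstrap: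
  assumes "open W" "continuous_on W \<xi>"
    and "\<And>c v. c \<in> Basis \<Longrightarrow> v \<in> W \<Longrightarrow> ((\<lambda>t. \<xi> (v + t *\<^sub>R c)) has_real_derivative D c v) (at 0)"
    and "\<And>k c. c \<in> Basis \<Longrightarrow> Ck k W \<xi> \<Longrightarrow> Ck k W (D c)"
  shows "smooth_on W \<xi>"
  unfolding smooth_on_iff_Ck
proof
  show "Ck k W \<xi>" for k
  proof (induction k)
    case (Suc k)
    show ?case
      by (rule Ck_SucI[where D = D]) (auto intro: assms Suc.IH simp del: Ck.simps)
  qed (simp add: assms)
qed

section \<open>Parameter integrals and Hadamard's lemma\<close>

lemma continuous_on_param_integral:
  fixes H :: "'a::euclidean_space \<times> real \<Rightarrow> real"
  assumes "continuous_on Om H" "W \<times> {0..1} \<subseteq> Om"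
  shows "continuous_on W (\<lambda>v. integral {0..1} (\<lambda>t. H (v, t)))"
proof -
  have "continuous_on (W \<times> cbox 0 1) (\<lambda>(v, t). H (v, t))"
    using continuous_on_subset[OF assms(1)] assms(2) by (simp add: cbox_interval case_prod_eta)
  from integral_continuous_on_param[OF this] show ?thesis
    by (simp add: cbox_interval)
qed

lemma has_real_derivative_param_integral:
  fixes H :: "'a::euclidean_space \<times> real \<Rightarrow> real"
  assumes H: "smooth_on Om H" and W: "open W" "W \<times> {0..1} \<subseteq> Om" and c: "c \<in> Basis" and v: "v \<in> W"
  shows "((\<lambda>s. integral {0..1} (\<lambda>t. H (v + s *\<^sub>R c, t))) has_real_derivative
           integral {0..1} (\<lambda>t. pdiff [(c, 0)] H (v, t))) (at 0)"
proof -
  have cB: "(c, 0) \<in> Basis" using c by (simp add: Basis_prod_def)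
  obtain r where r: "r > 0" "ball v r \<subseteq> W" using W(1) v openE by blast
  define U where "U = ball (0::real) r"
  have inO: "(v + s *\<^sub>R c, t) \<in> Om" if "s \<in> U" "t \<in> {0..1}" for s t
  proof -
    have "dist v (v + s *\<^sub>R c) < r" using that c by (simp add: U_def dist_norm)
    then have "v + s *\<^sub>R c \<in> W" using r by auto
    then show ?thesis using W(2) that(2) by auto
  qed
  have "((\<lambda>s. integral (cbox 0 1) (\<lambda>t. H (v + s *\<^sub>R c, t))) has_field_derivative
         integral (cbox 0 1) (\<lambda>t. pdiff [(c, 0)] H (v + 0 *\<^sub>R c, t))) (at 0 within U)"
  proof (rule leibniz_rule_field_derivative[where fx = "\<lambda>s t. pdiff [(c, 0)] H (v + s *\<^sub>R c, t)"])
    fix s t :: real assume s: "s \<in> U" and t: "t \<in> cbox 0 1"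
    have "(v, t) + s *\<^sub>R (c, 0) \<in> Om" using inO[OF s] t by (simp add: cbox_interval)
    from smooth_on_has_real_derivative_line[OF H cB this]
    show "((\<lambda>s. H (v + s *\<^sub>R c, t)) has_field_derivative pdiff [(c, 0)] H (v + s *\<^sub>R c, t)) (at s within U)"
      by (simp add: has_field_derivative_at_within)
  next
    fix s :: real assume s: "s \<in> U"
    have "continuous_on {0..1} (\<lambda>t. H (v + s *\<^sub>R c, t))"
      by (rule continuous_on_compose2[OF smooth_on_continuous_on[OF H]])
        (use inO[OF s] in \<open>auto intro!: continuous_intros\<close>)
    then show "(\<lambda>t. H (v + s *\<^sub>R c, t)) integrable_on cbox 0 1"
      by (simp add: cbox_interval integrable_continuous_interval)
  next
    have "continuous_on (U \<times> cbox 0 1) (\<lambda>p. pdiff [(c, 0)] H (v + fst p *\<^sub>R c, snd p))"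
      by (rule continuous_on_compose2[OF smooth_on_continuous_on[OF smooth_on_pdiff[OF H cB]]])
        (use inO in \<open>auto intro!: continuous_intros simp: cbox_interval\<close>)
    then show "continuous_on (U \<times> cbox 0 1) (\<lambda>(s, t). pdiff [(c, 0)] H (v + s *\<^sub>R c, t))"
      by (simp add: case_prod_unfold)
  qed (simp_all add: U_def r(1))
  moreover have "at 0 within U = at 0"
    by (intro at_within_open) (simp_all add: U_def r(1))
  ultimately show ?thesis
    by (simp add: cbox_interval)
qed

lemma Ck_param_integral:
  fixes H :: "'a::euclidean_space \<times> real \<Rightarrow> real"
  assumes "smooth_on Om H" "open W" "W \<times> {0..1} \<subseteq> Om"
  shows "Ck k W (\<lambda>v. integral {0..1} (\<lambda>t. H (v, t)))"
  using assms(1)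
proof (induction k arbitrary: H)
  case 0
  then show ?case
    using assms continuous_on_param_integral[OF smooth_on_continuous_on] by simp
next
  case (Suc k)
  have cB: "(c, 0) \<in> Basis" if "c \<in> Basis" for c :: 'a
    using that by (simp add: Basis_prod_def)
  show ?case
  proof (rule Ck_SucI[where D = "\<lambda>c v. integral {0..1} (\<lambda>t. pdiff [(c, 0)] H (v, t))"])
    show "continuous_on W (\<lambda>v. integral {0..1} (\<lambda>t. H (v, t)))"
      using continuous_on_param_integral[OF smooth_on_continuous_on[OF Suc.prems] assms(3)] .
    show "((\<lambda>s. integral {0..1} (\<lambda>t. H (v + s *\<^sub>R c, t))) has_real_derivative
        integral {0..1} (\<lambda>t. pdiff [(c, 0)] H (v, t))) (at 0)" if "c \<in> Basis" "v \<in> W" for c v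
      using has_real_derivative_param_integral[OF Suc.prems assms(2,3) that] .
    show "Ck k W (\<lambda>v. integral {0..1} (\<lambda>t. pdiff [(c, 0)] H (v, t)))" if "c \<in> Basis" for c
      using Suc.IH[OF smooth_on_pdiff[OF Suc.prems cB[OF that]]] .
  qed (rule assms(2))
qed

lemma smooth_on_param_integral:
  fixes H :: "'a::euclidean_space \<times> real \<Rightarrow> real"
  assumes "smooth_on Om H" "open W" "W \<times> {0..1} \<subseteq> Om"
  shows "smooth_on W (\<lambda>v. integral {0..1} (\<lambda>t. H (v, t)))"
  using Ck_param_integral[OF assms] by (simp add: smooth_on_iff_Ck)

lemma Basis_real3: "(Basis :: (real \<times> real \<times> real) set) = {(1, 0, 0), (0, 1, 0), (0, 0, 1)}"
  by (auto simp: Basis_prod_def zero_prod_def)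

lemma smooth_on_has_derivative_real3:
  fixes X :: "real \<times> real \<times> real \<Rightarrow> real"
  assumes "smooth_on S X" "x \<in> S"
  shows "(X has_derivative (\<lambda>u. fst u * pdiff [(1, 0, 0)] X x + fst (snd u) * pdiff [(0, 1, 0)] X x
    + snd (snd u) * pdiff [(0, 0, 1)] X x)) (at x)"
  using smooth_on_has_derivative[OF assms] by (simp add: Basis_real3 add.assoc inner_prod_def)

definition hadamard_quotient :: "(real \<times> real \<times> real \<Rightarrow> real) \<Rightarrow> real \<times> real \<times> real \<Rightarrow> real" where
  "hadamard_quotient B = (\<lambda>(X, Y, e). integral {0..1} (\<lambda>t. pdiff [(0, 1, 0)] B (X, t * Y, e)))"

lemma smooth_on_hadamard_quotient:
  assumes B: "smooth_on W B"
    and seg: "\<And>X Y e t. (X, Y, e) \<in> W \<Longrightarrow> t \<in> {0..1} \<Longrightarrow> (X, t * Y, e) \<in> W"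
  shows "smooth_on W (hadamard_quotient B)"
proof -
  define \<sigma> where "\<sigma> p = (fst (fst p), snd p * fst (snd (fst p)), snd (snd (fst p)))"
    for p :: "(real \<times> real \<times> real) \<times> real"
  define Om where "Om = \<sigma> -` W"
  have "open W" using B by (rule smooth_on_open)
  then have "open Om"
    unfolding Om_def \<sigma>_def by (rule open_vimage) (auto intro!: continuous_intros)
  have sub: "W \<times> {0..1} \<subseteq> Om"
    using seg by (auto simp: Om_def \<sigma>_def)
  have b: "(0, 1, 0) \<in> (Basis :: (real \<times> real \<times> real) set)" by (simp add: Basis_real3)
  have "smooth_map_on Om \<sigma>"
    unfolding \<sigma>_def smooth_map_on_Pair smooth_map_on_real_iff using \<open>open Om\<close>
    by (intro conjI smooth_on_mult smooth_on_linear) (simp_all add: linear_iff)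
  then have "smooth_on Om (\<lambda>p. pdiff [(0, 1, 0)] B (\<sigma> p))"
    by (rule smooth_on_compose[OF smooth_on_pdiff[OF B b]]) (auto simp: Om_def)
  from smooth_on_param_integral[OF this \<open>open W\<close> sub]
  show ?thesis
    unfolding hadamard_quotient_def \<sigma>_def by (simp add: case_prod_unfold)
qed

lemma hadamard_decomposition:
  assumes B: "smooth_on W B"
    and seg: "\<And>X Y e t. (X, Y, e) \<in> W \<Longrightarrow> t \<in> {0..1} \<Longrightarrow> (X, t * Y, e) \<in> W"
    and "(X, Y, e) \<in> W"
  shows "B (X, Y, e) = B (X, 0, e) + Y * hadamard_quotient B (X, Y, e)"
proof -
  define g where "g = (\<lambda>t. pdiff [(0, 1, 0)] B (X, t * Y, e))"
  have b: "(0, 1, 0) \<in> (Basis :: (real \<times> real \<times> real) set)" by (simp add: Basis_real3)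
  have "((\<lambda>t. B (X, t * Y, e)) has_vector_derivative g t * Y) (at t within {0..1})"
    if "t \<in> {0..1}" for t
  proof -
    have "(X, 0, e) + (t * Y) *\<^sub>R (0, 1, 0) \<in> W" using seg[OF assms(3) that] by simp
    from smooth_on_has_real_derivative_line[OF B b this]
    have "((\<lambda>s. B (X, s, e)) has_real_derivative g t) (at (t * Y))" by (simp add: g_def)
    moreover have "((\<lambda>t. t * Y) has_real_derivative Y) (at t)"
      by (auto intro!: derivative_eq_intros)
    ultimately have "((\<lambda>t. B (X, t * Y, e)) has_real_derivative g t * Y) (at t)"
      by (rule DERIV_chain2[where g = "\<lambda>t. t * Y" and x = t])
    then show ?thesis
      by (simp add: has_real_derivative_iff_has_vector_derivative[symmetric] has_field_derivative_at_within)
  qed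
  then have "((\<lambda>t. g t * Y) has_integral B (X, 1 * Y, e) - B (X, 0 * Y, e)) {0..1}"
    by (intro fundamental_theorem_of_calculus) auto
  moreover have "continuous_on {0..1} g"
    unfolding g_def using seg[OF assms(3)]
    by (intro continuous_on_compose2[OF smooth_on_continuous_on[OF smooth_on_pdiff[OF B b]]])
      (auto intro!: continuous_intros)
  then have "((\<lambda>t. g t * Y) has_integral integral {0..1} g * Y) {0..1}"
    by (intro has_integral_mult_left integrable_integral integrable_continuous_interval)
  ultimately have "B (X, Y, e) - B (X, 0, e) = integral {0..1} g * Y"
    by (simp add: has_integral_unique)
  moreover have "hadamard_quotient B (X, Y, e) = integral {0..1} g"
    by (simp add: hadamard_quotient_def g_def)
  ultimately show ?thesis
    by (simp add: algebra_simps)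
qed

section \<open>Inverting in the first variable\<close>

lemma has_real_derivative_first_variable:
  fixes X :: "real \<times> real \<times> real \<Rightarrow> real"
  assumes "smooth_on S X" "(x, y, e) \<in> S"
  shows "((\<lambda>s. X (s, y, e)) has_real_derivative pdiff [(1, 0, 0)] X (x, y, e)) (at x)"
  using smooth_on_has_real_derivative_line[OF assms(1), of "(1, 0, 0)" "(0, y, e)" x] assms(2)
  by (simp add: Basis_real3)

lemma strict_mono_on_first_variable:
  fixes X :: "real \<times> real \<times> real \<Rightarrow> real"
  assumes "smooth_on UNIV X" "\<And>s. a \<le> s \<Longrightarrow> s \<le> b \<Longrightarrow> pdiff [(1, 0, 0)] X (s, y, e) > 0"
  shows "strict_mono_on {a..b} (\<lambda>s. X (s, y, e))"
proof (rule strict_mono_onI)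
  fix x x' assume x: "x \<in> {a..b}" "x' \<in> {a..b}" "x < x'"
  show "X (x, y, e) < X (x', y, e)"
  proof (rule DERIV_pos_imp_increasing[OF \<open>x < x'\<close>])
    fix s assume "x \<le> s" "s \<le> x'"
    then have "a \<le> s" "s \<le> b" using x by auto
    then show "\<exists>d. ((\<lambda>s. X (s, y, e)) has_real_derivative d) (at s) \<and> d > 0"
      using has_real_derivative_first_variable[OF assms(1), of s y e] assms(2) by blast
  qed
qed

definition slab :: "real \<Rightarrow> real \<Rightarrow> real \<Rightarrow> (real \<times> real \<times> real) set" where
  "slab l u \<eta> = {(x, y, e). l < x \<and> x < u \<and> \<bar>y\<bar> < \<eta> \<and> \<bar>e\<bar> < \<eta>}"

lemma open_slab: "open (slab l u \<eta>)"
proof -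
  have "slab l u \<eta> = {v. l < fst v \<and> fst v < u \<and> \<bar>fst (snd v)\<bar> < \<eta> \<and> \<bar>snd (snd v)\<bar> < \<eta>}"
    by (auto simp: slab_def)
  then show ?thesis
    by (simp only:) (intro open_Collect_conj open_Collect_less continuous_intros)
qed

lemma slab_scale_second:
  "(Z, Y, e) \<in> slab l u \<eta> \<Longrightarrow> t \<in> {0..1} \<Longrightarrow> (Z, t * Y, e) \<in> slab l u \<eta>"
  by (auto simp: slab_def abs_mult intro: le_less_trans[OF mult_left_le_one_le])

lemma inj_on_straighten:
  fixes X :: "real \<times> real \<times> real \<Rightarrow> real"
  assumes "smooth_on UNIV X"
    and pos: "\<And>x y e. a \<le> x \<Longrightarrow> x \<le> b \<Longrightarrow> \<bar>y\<bar> \<le> \<eta> \<Longrightarrow> \<bar>e\<bar> \<le> \<eta> \<Longrightarrow> pdiff [(1, 0, 0)] X (x, y, e) > 0"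
  shows "inj_on (\<lambda>v. (X v, snd v)) (slab a b \<eta>)"
proof (rule inj_onI, clarsimp)
  fix x y e x' assume x: "(x, y, e) \<in> slab a b \<eta>" and x': "(x', y, e) \<in> slab a b \<eta>"
    and eq: "X (x, y, e) = X (x', y, e)"
  have "strict_mono_on {a..b} (\<lambda>s. X (s, y, e))"
    using x by (intro strict_mono_on_first_variable[OF assms(1)] pos) (auto simp: slab_def)
  then have "inj_on (\<lambda>s. X (s, y, e)) {a..b}"
    by (rule strict_mono_on_imp_inj_on)
  from inj_onD[OF this eq] x x' show "x = x'"
    by (auto simp: slab_def)
qed

lemma slab_subset_image_straighten:
  fixes X :: "real \<times> real \<times> real \<Rightarrow> real"
  assumes "continuous_on UNIV X" "a < b"
    and lo: "\<And>y e. \<bar>y\<bar> < \<eta> \<Longrightarrow> \<bar>e\<bar> < \<eta> \<Longrightarrow> X (a, y, e) < l"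
    and hi: "\<And>y e. \<bar>y\<bar> < \<eta> \<Longrightarrow> \<bar>e\<bar> < \<eta> \<Longrightarrow> u < X (b, y, e)"
  shows "slab l u \<eta> \<subseteq> (\<lambda>v. (X v, snd v)) ` slab a b \<eta>"
proof
  fix w assume "w \<in> slab l u \<eta>"
  then obtain Z y e where w: "w = (Z, y, e)" and Z: "l < Z" "Z < u" and ye: "\<bar>y\<bar> < \<eta>" "\<bar>e\<bar> < \<eta>"
    by (auto simp: slab_def)
  have "continuous_on {a..b} (\<lambda>s. X (s, y, e))"
    by (intro continuous_on_compose2[OF assms(1)]) (auto intro!: continuous_intros)
  then have "\<exists>x. a \<le> x \<and> x \<le> b \<and> X (x, y, e) = Z"
    using lo[OF ye] hi[OF ye] Z \<open>a < b\<close> by (intro IVT') auto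
  then obtain x where x: "a \<le> x" "x \<le> b" "X (x, y, e) = Z" by blast
  moreover have "x \<noteq> a" "x \<noteq> b" using x(3) lo[OF ye] hi[OF ye] Z by auto
  ultimately have "(x, y, e) \<in> slab a b \<eta>" using ye by (simp add: slab_def)
  then show "w \<in> (\<lambda>v. (X v, snd v)) ` slab a b \<eta>"
    by (rule rev_image_eqI) (simp add: w x(3))
qed

text \<open>Implicit differentiation: the partial derivative in direction c of the inverse of
  \<open>(x, y, e) \<mapsto> (X (x, y, e), y, e)\<close>, evaluated at the preimage v.\<close>

definition inverse_partial :: "(real \<times> real \<times> real \<Rightarrow> real) \<Rightarrow> real \<times> real \<times> real \<Rightarrow> real \<times> real \<times> real \<Rightarrow> real"
  where "inverse_partial X c v =
    (fst c - fst (snd c) * pdiff [(0, 1, 0)] X v - snd (snd c) * pdiff [(0, 0, 1)] X v) / pdiff [(1, 0, 0)] X v"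

lemma has_real_derivative_inv_into_straighten:
  fixes X :: "real \<times> real \<times> real \<Rightarrow> real"
  assumes "smooth_on UNIV X" "open S" "inj_on (\<lambda>v. (X v, snd v)) S" "x \<in> S"
    and "pdiff [(1, 0, 0)] X x \<noteq> 0"
  shows "((\<lambda>t. fst (inv_into S (\<lambda>v. (X v, snd v)) ((X x, snd x) + t *\<^sub>R c))) has_real_derivative
    inverse_partial X c x) (at 0)"
proof -
  have "continuous_on S (\<lambda>v. (X v, snd v))"
    using smooth_on_continuous_on[OF assms(1)]
    by (intro continuous_intros) (auto intro: continuous_on_subset)
  moreover have "((\<lambda>v. (X v, snd v)) has_derivative (\<lambda>u. (fst u * pdiff [(1, 0, 0)] X x
      + fst (snd u) * pdiff [(0, 1, 0)] X x + snd (snd u) * pdiff [(0, 0, 1)] X x, snd u))) (at x)"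
    using smooth_on_has_derivative_real3[OF assms(1)]
    by (intro has_derivative_Pair has_derivative_snd has_derivative_ident) auto
  ultimately have "(inv_into S (\<lambda>v. (X v, snd v)) has_derivative
      (\<lambda>u. (inverse_partial X u x, snd u))) (at (X x, snd x))"
    using assms(2-5) inv_into_f_f[OF assms(3)]
    by (intro has_derivative_inverse_strong[where f = "\<lambda>v. (X v, snd v)", simplified])
      (auto simp: fun_eq_iff field_simps inverse_partial_def)
  moreover have "((\<lambda>t::real. (X x, snd x) + t *\<^sub>R c) has_derivative (\<lambda>t. t *\<^sub>R c)) (at 0)"
    by (auto intro!: derivative_eq_intros)
  ultimately have "((\<lambda>t. inv_into S (\<lambda>v. (X v, snd v)) ((X x, snd x) + t *\<^sub>R c)) has_derivative
      (\<lambda>t. (inverse_partial X (t *\<^sub>R c) x, snd (t *\<^sub>R c)))) (at 0)"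
    using diff_chain_at by (fastforce simp: o_def)
  from has_derivative_fst[OF this] show ?thesis
    unfolding has_field_derivative_def
    by (rule has_derivative_eq_rhs) (auto simp: fun_eq_iff field_simps inverse_partial_def)
qed

lemma Ck_inverse_partial_pullback:
  fixes X \<xi> :: "real \<times> real \<times> real \<Rightarrow> real"
  assumes X: "smooth_on UNIV X" and "open S" "open T"
    and "\<And>v. v \<in> S \<Longrightarrow> pdiff [(1, 0, 0)] X v \<noteq> 0"
    and "Ck k T \<xi>" "\<And>w. w \<in> T \<Longrightarrow> (\<xi> w, snd w) \<in> S"
  shows "Ck k T (\<lambda>w. inverse_partial X c (\<xi> w, snd w))"
proof (rule Ck_compose[where G = "\<lambda>w. (\<xi> w, snd w)" and S = S, OF _ _ _ \<open>open T\<close>])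
  have "smooth_on S (inverse_partial X c)"
    unfolding inverse_partial_def using assms(2,4)
    by (intro smooth_on_divide smooth_on_diff smooth_on_mult smooth_on_const smooth_on_subset[OF smooth_on_pdiff[OF X]])
      (simp_all add: Basis_real3)
  then show "Ck k S (inverse_partial X c)" by (rule smooth_on_imp_Ck)
  have "linear (\<lambda>w::real \<times> real \<times> real. fst (snd w))" "linear (\<lambda>w::real \<times> real \<times> real. snd (snd w))"
    by (simp_all add: linear_iff)
  then show "Ck k T (\<lambda>w. (\<xi> w, snd w) \<bullet> i)" if "i \<in> Basis" for i
    using that assms(3,5) by (auto simp: Basis_real3 inner_prod_def intro: Ck_linear)
qed (use assms(6) in auto)

lemma inv_into_straighten:
  fixes X :: "real \<times> real \<times> real \<Rightarrow> real"
  assumes "inj_on (\<lambda>v. (X v, snd v)) S" "w \<in> (\<lambda>v. (X v, snd v)) ` S"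
  defines "x \<equiv> fst (inv_into S (\<lambda>v. (X v, snd v)) w)"
  shows "inv_into S (\<lambda>v. (X v, snd v)) w = (x, snd w)" "(x, snd w) \<in> S" "X (x, snd w) = fst w"
proof -
  have eq: "(X (inv_into S (\<lambda>v. (X v, snd v)) w), snd (inv_into S (\<lambda>v. (X v, snd v)) w)) = w"
    using f_inv_into_f[OF assms(2)] by simp
  then show inv: "inv_into S (\<lambda>v. (X v, snd v)) w = (x, snd w)"
    by (auto simp: x_def prod_eq_iff)
  show "(x, snd w) \<in> S"
    using inv_into_into[OF assms(2)] inv by simp
  show "X (x, snd w) = fst w"
    using eq inv by (metis fst_conv)
qed

lemma smooth_inverse_first_variable:
  fixes X :: "real \<times> real \<times> real \<Rightarrow> real"
  assumes X: "smooth_on UNIV X" and "a < b"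
    and pos: "\<And>x y e. a \<le> x \<Longrightarrow> x \<le> b \<Longrightarrow> \<bar>y\<bar> \<le> \<eta> \<Longrightarrow> \<bar>e\<bar> \<le> \<eta> \<Longrightarrow> pdiff [(1, 0, 0)] X (x, y, e) > 0"
    and lo: "\<And>y e. \<bar>y\<bar> < \<eta> \<Longrightarrow> \<bar>e\<bar> < \<eta> \<Longrightarrow> X (a, y, e) < l"
    and hi: "\<And>y e. \<bar>y\<bar> < \<eta> \<Longrightarrow> \<bar>e\<bar> < \<eta> \<Longrightarrow> u < X (b, y, e)"
  shows "\<exists>\<xi>. smooth_on (slab l u \<eta>) \<xi> \<and>
    (\<forall>Z y e. (Z, y, e) \<in> slab l u \<eta> \<longrightarrow> \<xi> (Z, y, e) \<in> {a<..<b} \<and> X (\<xi> (Z, y, e), y, e) = Z)"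
proof -
  define P where "P = (\<lambda>v. (X v, snd v))"
  define \<xi> where "\<xi> w = fst (inv_into (slab a b \<eta>) P w)" for w
  have inj: "inj_on P (slab a b \<eta>)"
    unfolding P_def using X pos by (rule inj_on_straighten)
  have sub: "slab l u \<eta> \<subseteq> P ` slab a b \<eta>"
    unfolding P_def using smooth_on_continuous_on[OF X] \<open>a < b\<close> lo hi by (rule slab_subset_image_straighten)
  have "w \<in> P ` slab a b \<eta>" if "w \<in> slab l u \<eta>" for w
    using sub that by blast
  note inv = inv_into_straighten[OF inj[unfolded P_def] this[unfolded P_def], folded P_def, folded \<xi>_def]
  have Xx_nonzero: "pdiff [(1, 0, 0)] X v \<noteq> 0" if "v \<in> slab a b \<eta>" for v
    using that pos[of "fst v" "fst (snd v)" "snd (snd v)"] by (auto simp: slab_def)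
  have "continuous_on (P ` slab a b \<eta>) (inv_into (slab a b \<eta>) P)"
  proof (rule continuous_on_inverse_open[OF open_slab])
    show "continuous_on (slab a b \<eta>) P"
      unfolding P_def using smooth_on_continuous_on[OF X]
      by (auto intro!: continuous_intros intro: continuous_on_subset)
    show "inv_into (slab a b \<eta>) P (P v) = v" if "v \<in> slab a b \<eta>" for v
      using inv_into_f_f[OF inj that] .
  qed simp
  then have "continuous_on (slab l u \<eta>) \<xi>"
    unfolding \<xi>_def by (rule continuous_on_fst[OF continuous_on_subset[OF _ sub]])
  moreover have "((\<lambda>t. \<xi> (w + t *\<^sub>R c)) has_real_derivative inverse_partial X c (\<xi> w, snd w)) (at 0)"
    if "c \<in> Basis" "w \<in> slab l u \<eta>" for c w
  proof -
    have "(X (\<xi> w, snd w), snd (\<xi> w, snd w)) = w" using inv(3)[OF that(2)] by (simp add: prod_eq_iff)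
    with has_real_derivative_inv_into_straighten[OF X open_slab inj[unfolded P_def] inv(2)[OF that(2)]
        Xx_nonzero[OF inv(2)[OF that(2)]], of c]
    show ?thesis by (simp add: \<xi>_def P_def)
  qed
  moreover have "Ck k (slab l u \<eta>) (\<lambda>w. inverse_partial X c (\<xi> w, snd w))" if "Ck k (slab l u \<eta>) \<xi>" for k c
    using X open_slab open_slab Xx_nonzero that inv(2) by (rule Ck_inverse_partial_pullback)
  ultimately have "smooth_on (slab l u \<eta>) \<xi>"
    by (intro smooth_on_bootstrap[where D = "\<lambda>c w. inverse_partial X c (\<xi> w, snd w)", OF open_slab]) auto
  then show ?thesis
    using inv by (auto simp: slab_def)
qed

lemma norm_triple_le: "norm ((u, v, w) :: real \<times> real \<times> real) \<le> \<bar>u\<bar> + \<bar>v\<bar> + \<bar>w\<bar>"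
  using norm_Pair_le[of u "(v, w)"] norm_Pair_le[of v w] by simp

lemma positive_near_segment:
  fixes G :: "real \<times> real \<times> real \<Rightarrow> real"
  assumes "continuous_on UNIV G" "\<And>x. x \<in> {a..b} \<Longrightarrow> G (x, 0, 0) > 0" "a \<le> b"
  shows "\<exists>\<rho>>0. \<forall>x y e. a - \<rho> \<le> x \<longrightarrow> x \<le> b + \<rho> \<longrightarrow> \<bar>y\<bar> \<le> \<rho> \<longrightarrow> \<bar>e\<bar> \<le> \<rho> \<longrightarrow> G (x, y, e) > 0"
proof -
  have "compact ((\<lambda>x. (x, 0, 0)) ` {a..b})"
    by (intro compact_continuous_image continuous_intros compact_Icc)
  moreover have "open {v. G v > 0}"
    using assms(1) by (simp add: open_Collect_less)
  ultimately obtain \<epsilon> where "\<epsilon> > 0" and \<epsilon>: "(\<Union>v\<in>(\<lambda>x. (x, 0, 0)) ` {a..b}. ball v \<epsilon>) \<subseteq> {v. G v > 0}"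
    using compact_subset_open_imp_ball_epsilon_subset[of _ "{v. G v > 0}"] assms(2) by blast
  show ?thesis
  proof (intro exI[of _ "\<epsilon> / 4"] conjI allI impI)
    fix x y e assume box: "a - \<epsilon> / 4 \<le> x" "x \<le> b + \<epsilon> / 4" "\<bar>y\<bar> \<le> \<epsilon> / 4" "\<bar>e\<bar> \<le> \<epsilon> / 4"
    define x0 where "x0 = max a (min b x)"
    have x0: "x0 \<in> {a..b}" "\<bar>x0 - x\<bar> \<le> \<epsilon> / 4"
      using box \<open>a \<le> b\<close> by (auto simp: x0_def abs_le_iff split: split_max split_min)
    have "dist (x0, 0, 0) (x, y, e) \<le> \<bar>x0 - x\<bar> + \<bar>- y\<bar> + \<bar>- e\<bar>"
      using norm_triple_le[of "x0 - x" "- y" "- e"] by (simp add: dist_norm)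
    also have "\<dots> < \<epsilon>" using x0 box \<open>\<epsilon> > 0\<close> by linarith
    finally have "(x, y, e) \<in> ball (x0, 0, 0) \<epsilon>" by simp
    moreover have "(x0, 0, 0) \<in> (\<lambda>x. (x, 0, 0)) ` {a..b}" using x0(1) by (rule imageI)
    ultimately show "G (x, y, e) > 0"
      using \<epsilon> by blast
  qed (use \<open>\<epsilon> > 0\<close> in simp)
qed

lemma uniformly_close_on_lines:
  fixes X :: "real \<times> real \<times> real \<Rightarrow> real"
  assumes "continuous_on UNIV X" "\<gamma> > 0" "finite P"
  shows "\<exists>\<eta>>0. \<forall>p\<in>P. \<forall>y e. \<bar>y\<bar> < \<eta> \<longrightarrow> \<bar>e\<bar> < \<eta> \<longrightarrow> \<bar>X (p, y, e) - X (p, 0, 0)\<bar> < \<gamma>"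
proof -
  have "((\<lambda>q. X (p, fst q, snd q)) \<longlongrightarrow> X (p, 0, 0)) (nhds 0)" for p
  proof -
    have "continuous_on UNIV (\<lambda>q::real \<times> real. X (p, fst q, snd q))"
      by (intro continuous_on_compose2[OF assms(1)] continuous_intros) auto
    then show ?thesis
      by (simp add: tendsto_nhds_iff continuous_on_def zero_prod_def)
  qed
  then have "eventually (\<lambda>q. \<forall>p\<in>P. dist (X (p, fst q, snd q)) (X (p, 0, 0)) < \<gamma>) (nhds 0)"
    using assms(2,3) by (intro eventually_ball_finite) (auto simp: tendsto_iff)
  then obtain d where "d > 0" and d: "\<And>q. dist q 0 < d \<Longrightarrow> \<forall>p\<in>P. \<bar>X (p, fst q, snd q) - X (p, 0, 0)\<bar> < \<gamma>"
    unfolding eventually_nhds_metric by (auto simp: dist_real_def)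
  show ?thesis
  proof (intro exI[of _ "d / 2"] conjI ballI allI impI)
    fix p y e assume "p \<in> P" "\<bar>y\<bar> < d / 2" "\<bar>e\<bar> < d / 2"
    moreover have "dist (y, e) 0 \<le> \<bar>y\<bar> + \<bar>e\<bar>"
      using norm_Pair_le[of y e] by (simp add: dist_norm zero_prod_def)
    ultimately show "\<bar>X (p, y, e) - X (p, 0, 0)\<bar> < \<gamma>"
      using d[of "(y, e)"] by simp
  qed (use \<open>d > 0\<close> in simp)
qed

lemma straightening_on_box:
  fixes X :: "real \<times> real \<times> real \<Rightarrow> real"
  assumes X: "smooth_on UNIV X" and ab: "a' < a" "a < b" "b < b'" and "\<rho> > 0"
    and pos: "\<And>x y e. a' \<le> x \<Longrightarrow> x \<le> b' \<Longrightarrow> \<bar>y\<bar> \<le> \<rho> \<Longrightarrow> \<bar>e\<bar> \<le> \<rho> \<Longrightarrow>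
      pdiff [(1, 0, 0)] X (x, y, e) > 0"
  obtains \<eta> l u \<xi> where "\<eta> > 0" "smooth_on (slab l u \<eta>) \<xi>"
    "\<And>x y e. a < x \<Longrightarrow> x < b \<Longrightarrow> \<bar>y\<bar> < \<eta> \<Longrightarrow> \<bar>e\<bar> < \<eta> \<Longrightarrow>
       (X (x, y, e), y, e) \<in> slab l u \<eta> \<and> \<xi> (X (x, y, e), y, e) = x"
proof -
  have mono: "X (x, y, e) < X (x', y, e)"
    if "a' \<le> x" "x < x'" "x' \<le> b'" "\<bar>y\<bar> \<le> \<rho>" "\<bar>e\<bar> \<le> \<rho>" for x x' y e
    using strict_mono_on_first_variable[OF X, of a' b' y e] pos that
    by (auto simp: strict_mono_on_def)
  define \<gamma> where "\<gamma> = min (X (a, 0, 0) - X (a', 0, 0)) (X (b', 0, 0) - X (b, 0, 0)) / 3"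
  have "\<gamma> > 0"
    using mono[of a' a 0 0] mono[of b b' 0 0] ab \<open>\<rho> > 0\<close> by (simp add: \<gamma>_def)
  have \<gamma>_le: "3 * \<gamma> \<le> X (a, 0, 0) - X (a', 0, 0)" "3 * \<gamma> \<le> X (b', 0, 0) - X (b, 0, 0)"
    by (simp_all add: \<gamma>_def)
  obtain \<delta> where "\<delta> > 0" and close: "\<And>p y e. p \<in> {a', a, b, b'} \<Longrightarrow> \<bar>y\<bar> < \<delta> \<Longrightarrow> \<bar>e\<bar> < \<delta> \<Longrightarrow>
      \<bar>X (p, y, e) - X (p, 0, 0)\<bar> < \<gamma>"
    using uniformly_close_on_lines[OF smooth_on_continuous_on[OF X] \<open>\<gamma> > 0\<close>, of "{a', a, b, b'}"] by blast
  define \<eta> where "\<eta> = min \<delta> \<rho>"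
  define l where "l = X (a', 0, 0) + \<gamma>"
  define u where "u = X (b', 0, 0) - \<gamma>"
  have "\<eta> > 0" using \<open>\<delta> > 0\<close> \<open>\<rho> > 0\<close> by (simp add: \<eta>_def)
  have "X (a', y, e) < l" "u < X (b', y, e)" if "\<bar>y\<bar> < \<eta>" "\<bar>e\<bar> < \<eta>" for y e
    using close[of a' y e] close[of b' y e] that by (auto simp: l_def u_def \<eta>_def)
  then have "\<exists>\<xi>. smooth_on (slab l u \<eta>) \<xi> \<and>
      (\<forall>Z y e. (Z, y, e) \<in> slab l u \<eta> \<longrightarrow> \<xi> (Z, y, e) \<in> {a'<..<b'} \<and> X (\<xi> (Z, y, e), y, e) = Z)"
    using pos ab by (intro smooth_inverse_first_variable[OF X]) (auto simp: \<eta>_def)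
  then obtain \<xi> where \<xi>: "smooth_on (slab l u \<eta>) \<xi>"
    and inv: "\<And>Z y e. (Z, y, e) \<in> slab l u \<eta> \<Longrightarrow> \<xi> (Z, y, e) \<in> {a'<..<b'} \<and> X (\<xi> (Z, y, e), y, e) = Z"
    by blast
  show ?thesis
  proof (rule that[OF \<open>\<eta> > 0\<close> \<xi>])
    fix x y e assume x: "a < x" "x < b" and ye: "\<bar>y\<bar> < \<eta>" "\<bar>e\<bar> < \<eta>"
    have ye': "\<bar>y\<bar> \<le> \<rho>" "\<bar>e\<bar> \<le> \<rho>" using ye by (auto simp: \<eta>_def)
    have "l < X (a, y, e)" "X (b, y, e) < u"
      using close[of a y e] close[of b y e] ye \<gamma>_le by (auto simp: l_def u_def \<eta>_def)
    moreover have "X (a, y, e) < X (x, y, e)" "X (x, y, e) < X (b, y, e)"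
      using mono x ye' ab by auto
    ultimately have mem: "(X (x, y, e), y, e) \<in> slab l u \<eta>"
      using ye by (simp add: slab_def)
    moreover have "\<not> x < \<xi> (X (x, y, e), y, e)" "\<not> \<xi> (X (x, y, e), y, e) < x"
      using inv[OF mem] x ye' ab mono[of x "\<xi> (X (x, y, e), y, e)" y e] mono[of "\<xi> (X (x, y, e), y, e)" x y e]
      by auto
    then have "\<xi> (X (x, y, e), y, e) = x" by linarith
    ultimately show "(X (x, y, e), y, e) \<in> slab l u \<eta> \<and> \<xi> (X (x, y, e), y, e) = x" by blast
  qed
qed

lemma straightening_neighbourhood:
  fixes X :: "real \<times> real \<times> real \<Rightarrow> real"
  assumes X: "smooth_on UNIV X" and "a \<le> b"
    and pos: "\<And>x. x \<in> {a..b} \<Longrightarrow> pdiff [(1, 0, 0)] X (x, 0, 0) > 0"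
  obtains \<eta> a1 b1 l u \<xi> where "\<eta> > 0" "a1 < a" "b < b1" "smooth_on (slab l u \<eta>) \<xi>"
    "\<And>x y e. a1 < x \<Longrightarrow> x < b1 \<Longrightarrow> \<bar>y\<bar> < \<eta> \<Longrightarrow> \<bar>e\<bar> < \<eta> \<Longrightarrow>
       (X (x, y, e), y, e) \<in> slab l u \<eta> \<and> \<xi> (X (x, y, e), y, e) = x"
proof -
  have "continuous_on UNIV (pdiff [(1, 0, 0)] X)"
    using X by (intro smooth_on_continuous_on smooth_on_pdiff) (auto simp: Basis_real3)
  from positive_near_segment[OF this pos \<open>a \<le> b\<close>] obtain \<rho> where "\<rho> > 0" and \<rho>: "\<And>x y e. a - \<rho> \<le> x \<Longrightarrow> x \<le> b + \<rho> \<Longrightarrow> \<bar>y\<bar> \<le> \<rho> \<Longrightarrow> \<bar>e\<bar> \<le> \<rho> \<Longrightarrow>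
      pdiff [(1, 0, 0)] X (x, y, e) > 0"
    by blast
  show ?thesis
  proof (rule straightening_on_box[where a = "a - \<rho> / 2" and b = "b + \<rho> / 2", OF X _ _ _ \<open>\<rho> > 0\<close> \<rho>])
    fix \<eta> l u \<xi> assume \<eta>: "\<eta> > 0" and \<xi>: "smooth_on (slab l u \<eta>) \<xi>"
      and str: "\<And>x y e. a - \<rho> / 2 < x \<Longrightarrow> x < b + \<rho> / 2 \<Longrightarrow> \<bar>y\<bar> < \<eta> \<Longrightarrow> \<bar>e\<bar> < \<eta> \<Longrightarrow>
        (X (x, y, e), y, e) \<in> slab l u \<eta> \<and> \<xi> (X (x, y, e), y, e) = x"
    show thesis
      using \<open>\<rho> > 0\<close> by (intro that[OF \<eta> _ _ \<xi> str]) auto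
  qed (use \<open>\<rho> > 0\<close> \<open>a \<le> b\<close> in auto)
qed

lemma smooth_map_on_straighten:
  fixes X :: "real \<times> real \<times> real \<Rightarrow> real"
  assumes "smooth_on UNIV X" "open U"
  shows "smooth_map_on U (\<lambda>(x, y). (X (x, y, e), y))"
proof -
  have "smooth_map_on U (\<lambda>z. (fst z, snd z, e))"
    using assms(2) unfolding smooth_map_on_Pair smooth_map_on_real_iff
    by (intro conjI smooth_on_linear smooth_on_const) (simp_all add: linear_iff)
  then have "smooth_on U (\<lambda>z. X (fst z, snd z, e))"
    by (rule smooth_on_compose[OF assms(1)]) simp
  moreover have "smooth_on U snd"
    using assms(2) by (intro smooth_on_linear) (simp_all add: linear_iff)
  ultimately show ?thesis
    by (simp add: case_prod_unfold smooth_map_on_Pair smooth_map_on_real_iff)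
qed

lemma smooth_map_on_unstraighten:
  fixes \<xi> :: "real \<times> real \<times> real \<Rightarrow> real"
  assumes "smooth_on W \<xi>" "open V" "\<And>w. w \<in> V \<Longrightarrow> (fst w, snd w, e) \<in> W"
  shows "smooth_map_on V (\<lambda>w. (\<xi> (fst w, snd w, e), snd w))"
proof -
  have "smooth_map_on V (\<lambda>w. (fst w, snd w, e))"
    using assms(2) unfolding smooth_map_on_Pair
    by (intro conjI smooth_map_on_linear smooth_map_on_const linear_fst linear_snd)
  then have "smooth_on V (\<lambda>w. \<xi> (fst w, snd w, e))"
    by (rule smooth_on_compose[OF assms(1)]) (use assms(3) in auto)
  then show ?thesis
    using smooth_map_on_linear[OF assms(2) linear_snd] by (simp add: smooth_map_on_Pair smooth_map_on_real_iff)
qed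

lemma diffeo_on_straighten:
  fixes X \<xi> :: "real \<times> real \<times> real \<Rightarrow> real"
  assumes X: "smooth_on UNIV X" and "open U" and \<xi>: "smooth_on W \<xi>"
    and inv: "\<And>x y. (x, y) \<in> U \<Longrightarrow> (X (x, y, e), y, e) \<in> W \<and> \<xi> (X (x, y, e), y, e) = x"
  shows "diffeo_on U (\<lambda>(x, y). (X (x, y, e), y))"
proof -
  define \<Phi> where "\<Phi> = (\<lambda>(x, y). (X (x, y, e), y))"
  have \<Phi>: "smooth_map_on U \<Phi>"
    unfolding \<Phi>_def using X \<open>open U\<close> by (rule smooth_map_on_straighten)
  have inv_\<Phi>: "(\<xi> (fst (\<Phi> z), snd (\<Phi> z), e), snd (\<Phi> z)) = z \<and> (fst (\<Phi> z), snd (\<Phi> z), e) \<in> W"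
    if "z \<in> U" for z
    using inv[of "fst z" "snd z"] that by (simp add: \<Phi>_def case_prod_unfold)
  then have "inj_on \<Phi> U"
    by (metis inj_onI)
  have "continuous_on U \<Phi>"
    using \<Phi> smooth_on_continuous_on unfolding smooth_map_on_def
    by (intro continuous_on_componentwise[THEN iffD2]) blast
  then have "open (\<Phi> ` U)"
    using \<open>open U\<close> \<open>inj_on \<Phi> U\<close> by (rule invariance_of_domain)
  have inv_into_\<Phi>: "inv_into U \<Phi> w = (\<xi> (fst w, snd w, e), snd w)" if w: "w \<in> \<Phi> ` U" for w
  proof -
    obtain z where z: "z \<in> U" "w = \<Phi> z" using w by blast
    then have "inv_into U \<Phi> w = z" using inv_into_f_f[OF \<open>inj_on \<Phi> U\<close> z(1)] by simp
    then show ?thesis using inv_\<Phi>[OF z(1)] z(2) by simp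
  qed
  have "smooth_map_on (\<Phi> ` U) (\<lambda>w. (\<xi> (fst w, snd w, e), snd w))"
    using \<xi> \<open>open (\<Phi> ` U)\<close> by (rule smooth_map_on_unstraighten) (use inv_\<Phi> in blast)
  then have "smooth_map_on (\<Phi> ` U) (inv_into U \<Phi>)"
    by (rule smooth_map_on_cong) (simp add: inv_into_\<Phi>)
  then show ?thesis
    unfolding diffeo_on_def \<Phi>_def[symmetric]
    using \<open>open U\<close> \<open>inj_on \<Phi> U\<close> \<open>open (\<Phi> ` U)\<close> \<Phi> by blast
qed

lemma has_derivative_straighten:
  fixes X :: "real \<times> real \<times> real \<Rightarrow> real"
  assumes "smooth_on UNIV X"
  shows "((\<lambda>(x', y'). (X (x', y', e), y')) has_derivative
    (\<lambda>(u, v). (u * pdiff [(1, 0, 0)] X (x, y, e) + v * pdiff [(0, 1, 0)] X (x, y, e), v))) (at (x, y))"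
proof -
  have "((\<lambda>z. (fst z, snd z, e)) has_derivative (\<lambda>z. (fst z, snd z, 0))) (at (x, y))"
    by (auto intro!: derivative_eq_intros)
  moreover have "(X has_derivative (\<lambda>u. fst u * pdiff [(1, 0, 0)] X (x, y, e)
      + fst (snd u) * pdiff [(0, 1, 0)] X (x, y, e) + snd (snd u) * pdiff [(0, 0, 1)] X (x, y, e)))
      (at (fst (x, y), snd (x, y), e))"
    using smooth_on_has_derivative_real3[OF assms, of "(x, y, e)"] by simp
  ultimately have "((\<lambda>z. X (fst z, snd z, e)) has_derivative
      (\<lambda>z. fst z * pdiff [(1, 0, 0)] X (x, y, e) + snd z * pdiff [(0, 1, 0)] X (x, y, e))) (at (x, y))"
    by (rule diff_chain_at[THEN has_derivative_eq_rhs, unfolded o_def]) (simp add: fun_eq_iff)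
  then show ?thesis
    unfolding case_prod_unfold by (intro has_derivative_Pair has_derivative_snd has_derivative_ident)
qed

section \<open>The weighted coordinate\<close>

lemma has_real_derivative_weighted:
  fixes g :: "real \<Rightarrow> real"
  assumes "(g has_real_derivative g') (at x)"
  shows "((\<lambda>s. - g s * (1 + s\<^sup>2) ^ Suc n) has_real_derivative
    (1 + x\<^sup>2) ^ n * (- g' * (1 + x\<^sup>2) + 2 * Suc n * (- (x * g x)))) (at x)"
proof -
  have "((\<lambda>s. 1 + s\<^sup>2) has_real_derivative 2 * x) (at x)"
    by (auto intro!: derivative_eq_intros)
  from DERIV_mult[OF DERIV_minus[OF assms] DERIV_power[OF this, of "Suc n"]]
  show ?thesis
    by (rule DERIV_cong) (simp add: algebra_simps)
qed

lemma positive_lower_bound_on_compact: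
  fixes F :: "'a::metric_space \<Rightarrow> real"
  assumes "compact S" "continuous_on S F" "\<And>x. x \<in> S \<Longrightarrow> F x > 0"
  shows "\<exists>c>0. \<forall>x\<in>S. c \<le> F x"
proof (cases "S = {}")
  case False
  from continuous_attains_inf[OF assms(1) False assms(2)] assms(3) show ?thesis
    by blast
qed (auto intro: zero_less_one)

text \<open>Near 0 the term \<open>- g' x (1 + x\<^sup>2)\<close> is positive; away from 0 the term \<open>- x g x\<close> is bounded
  below, so it dominates once n is large.\<close>

lemma weighted_slope_positive:
  fixes g g' :: "real \<Rightarrow> real"
  assumes sign: "\<And>x. x \<in> {a..b} - {0} \<Longrightarrow> x * g x < 0"
    and cont: "continuous_on UNIV g" "continuous_on UNIV g'" and "g' 0 < 0"
  shows "\<exists>n. \<forall>x\<in>{a..b}. - g' x * (1 + x\<^sup>2) + 2 * Suc n * (- (x * g x)) > 0"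
proof -
  have "(g' \<longlongrightarrow> g' 0) (nhds 0)"
    using cont(2) by (simp add: tendsto_nhds_iff continuous_on_def)
  then have "eventually (\<lambda>x. g' x < 0) (nhds 0)"
    using \<open>g' 0 < 0\<close> by (rule order_tendstoD)
  then obtain \<delta> where "\<delta> > 0" and \<delta>: "\<And>x. \<bar>x\<bar> < \<delta> \<Longrightarrow> g' x < 0"
    unfolding eventually_nhds_metric by (auto simp: dist_real_def)
  have cpt: "compact ({a..b} \<inter> {x. \<delta> / 2 \<le> \<bar>x\<bar>})"
    by (intro compact_Int_closed compact_Icc closed_Collect_le continuous_intros)
  have cnt: "continuous_on ({a..b} \<inter> {x. \<delta> / 2 \<le> \<bar>x\<bar>}) (\<lambda>x. - (x * g x))"
    by (intro continuous_intros continuous_on_subset[OF cont(1)]) auto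
  have "- (x * g x) > 0" if "x \<in> {a..b} \<inter> {x. \<delta> / 2 \<le> \<bar>x\<bar>}" for x
    using sign[of x] that \<open>\<delta> > 0\<close> by auto
  from positive_lower_bound_on_compact[OF cpt cnt this]
  obtain c where "c > 0" and c: "\<And>x. x \<in> {a..b} \<inter> {x. \<delta> / 2 \<le> \<bar>x\<bar>} \<Longrightarrow> c \<le> - (x * g x)"
    by blast
  have "bounded ((\<lambda>x. g' x * (1 + x\<^sup>2)) ` {a..b})"
    by (intro compact_imp_bounded compact_continuous_image continuous_intros continuous_on_subset[OF cont(2)]) auto
  then obtain M where M: "\<And>x. x \<in> {a..b} \<Longrightarrow> \<bar>g' x * (1 + x\<^sup>2)\<bar> \<le> M"
    unfolding bounded_real by blast
  obtain n :: nat where "M / (2 * c) < n" using reals_Archimedean2 by blast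
  then have n: "M < 2 * Suc n * c" using \<open>c > 0\<close> by (simp add: field_simps)
  show ?thesis
  proof (intro exI ballI)
    fix x assume x: "x \<in> {a..b}"
    have "0 \<le> - (x * g x)" using sign[of x] x by (cases "x = 0") auto
    show "- g' x * (1 + x\<^sup>2) + 2 * Suc n * (- (x * g x)) > 0"
    proof (cases "\<bar>x\<bar> < \<delta> / 2")
      case True
      then have "- g' x * (1 + x\<^sup>2) > 0" using \<delta>[of x] \<open>\<delta> > 0\<close>
        by (simp add: mult_neg_pos add_pos_nonneg)
      moreover have "2 * Suc n * (- (x * g x)) \<ge> 0"
        using \<open>0 \<le> - (x * g x)\<close> by (intro mult_nonneg_nonneg) auto
      ultimately show ?thesis by linarith
    next
      case False
      then have "c \<le> - (x * g x)" using c x by simp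
      then have "2 * Suc n * c \<le> 2 * Suc n * (- (x * g x))" by (intro mult_left_mono) auto
      then show ?thesis using M[OF x] n by linarith
    qed
  qed
qed

lemma first_partial_weighted:
  fixes h :: "real \<times> real \<times> real \<Rightarrow> real"
  assumes "smooth_on UNIV h"
  shows "pdiff [(1, 0, 0)] (\<lambda>v. - h v * (1 + (fst v)\<^sup>2) ^ Suc n) (x, 0, 0) =
    (1 + x\<^sup>2) ^ n * (- pdiff [(1, 0, 0)] h (x, 0, 0) * (1 + x\<^sup>2) + 2 * Suc n * (- (x * h (x, 0, 0))))"
proof -
  have "smooth_on UNIV (\<lambda>v::real \<times> real \<times> real. fst v)"
    by (intro smooth_on_linear) (simp_all add: linear_iff)
  then have "smooth_on UNIV (\<lambda>v::real \<times> real \<times> real. - h v * (1 + (fst v)\<^sup>2) ^ Suc n)"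
    by (intro smooth_on_mult smooth_on_uminus smooth_on_power smooth_on_add smooth_on_const assms) simp_all
  from has_real_derivative_first_variable[OF this UNIV_I, where x = x and y = 0 and e = 0]
  have "((\<lambda>s. - h (s, 0, 0) * (1 + s\<^sup>2) ^ Suc n) has_real_derivative
      pdiff [(1, 0, 0)] (\<lambda>v. - h v * (1 + (fst v)\<^sup>2) ^ Suc n) (x, 0, 0)) (at x)"
    by simp
  moreover have "((\<lambda>s. - h (s, 0, 0) * (1 + s\<^sup>2) ^ Suc n) has_real_derivative
      (1 + x\<^sup>2) ^ n * (- pdiff [(1, 0, 0)] h (x, 0, 0) * (1 + x\<^sup>2) + 2 * Suc n * (- (x * h (x, 0, 0))))) (at x)"
    using has_real_derivative_first_variable[OF assms UNIV_I, where x = x and y = 0 and e = 0] by (rule has_real_derivative_weighted)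
  ultimately show ?thesis
    by (rule DERIV_unique)
qed

lemma exists_weight_exponent:
  fixes h :: "real \<times> real \<times> real \<Rightarrow> real"
  assumes h: "smooth_on UNIV h"
    and sign: "\<forall>x\<in>{a..b} - {0}. x * h (x, 0, 0) < 0"
    and "d < 0" "((\<lambda>x. h (x, 0, 0)) has_real_derivative d) (at 0)"
  shows "\<exists>n. \<forall>x\<in>{a..b}. pdiff [(1, 0, 0)] (\<lambda>v. - h v * (1 + (fst v)\<^sup>2) ^ Suc n) (x, 0, 0) > 0"
proof -
  have cont: "continuous_on UNIV (\<lambda>x. F (x, 0, 0))" if "smooth_on UNIV F" for F :: "real \<times> real \<times> real \<Rightarrow> real"
    by (rule continuous_on_compose2[OF smooth_on_continuous_on[OF that]]) (auto intro!: continuous_intros)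
  have "(1, 0, 0) \<in> (Basis :: (real \<times> real \<times> real) set)" by (simp add: Basis_real3)
  have "pdiff [(1, 0, 0)] h (0, 0, 0) = d"
    using has_real_derivative_first_variable[OF h UNIV_I, where x = 0 and y = 0 and e = 0] assms(4)
    by (rule DERIV_unique)
  then obtain n where n: "\<And>x. x \<in> {a..b} \<Longrightarrow>
      - pdiff [(1, 0, 0)] h (x, 0, 0) * (1 + x\<^sup>2) + 2 * Suc n * (- (x * h (x, 0, 0))) > 0"
    using weighted_slope_positive[OF _ cont[OF h] cont[OF smooth_on_pdiff[OF h \<open>(1, 0, 0) \<in> Basis\<close>]]]
      sign \<open>d < 0\<close> by blast
  have "pdiff [(1, 0, 0)] (\<lambda>v. - h v * (1 + (fst v)\<^sup>2) ^ Suc n) (x, 0, 0) > 0" if "x \<in> {a..b}" for x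
  proof -
    have "(1 + x\<^sup>2) ^ n > 0" by (intro zero_less_power add_pos_nonneg) auto
    then show ?thesis
      unfolding first_partial_weighted[OF h] using n[OF that] by (rule mult_pos_pos)
  qed
  then show ?thesis by blast
qed

lemma zero_of_sign_change:
  fixes g :: "real \<Rightarrow> real"
  assumes "continuous_on {a..b} g" "a < 0" "0 < b" "\<forall>x\<in>{a..b} - {0}. x * g x < 0"
  shows "\<exists>x0\<in>{a..b}. g x0 = 0"
proof -
  have "a * g a < 0" "b * g b < 0"
    using assms(2-4) by auto
  then have "g a > 0" "g b < 0"
    using assms(2,3) by (auto simp: mult_less_0_iff)
  then show ?thesis
    using IVT2'[of g b 0 a] assms(1-3) by force
qed

text \<open>X is the new first coordinate, \<xi> inverts it in the first variable, and p is the positive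
  factor by which the vector field is multiplied.\<close>

locale straightened_slow_fast =
  fixes f h X :: "real \<times> real \<times> real \<Rightarrow> real" and p :: "real \<Rightarrow> real"
    and a b \<eta> a1 b1 l u x0 :: real and \<xi> :: "real \<times> real \<times> real \<Rightarrow> real"
  assumes smooth_f: "smooth_on UNIV f" and smooth_h: "smooth_on UNIV h"
    and smooth_p: "smooth_on UNIV p" and p_pos: "\<And>x. p x > 0"
    and X_eq: "\<And>v. X v = - h v * p (fst v)"
    and \<eta>_pos: "\<eta> > 0" and a1_less: "a1 < a" and b1_greater: "b < b1"
    and smooth_\<xi>: "smooth_on (slab l u \<eta>) \<xi>"
    and straighten: "\<And>x y e. a1 < x \<Longrightarrow> x < b1 \<Longrightarrow> \<bar>y\<bar> < \<eta> \<Longrightarrow> \<bar>e\<bar> < \<eta> \<Longrightarrow>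
       (X (x, y, e), y, e) \<in> slab l u \<eta> \<and> \<xi> (X (x, y, e), y, e) = x"
    and zero: "x0 \<in> {a..b}" "h (x0, 0, 0) = 0"
begin

definition U :: "(real \<times> real) set" where
  "U = {(x, y). a1 < x \<and> x < b1 \<and> \<bar>y\<bar> < \<eta>}"

definition \<Phi> :: "real \<times> real \<times> real \<Rightarrow> real \<times> real" where
  "\<Phi> = (\<lambda>(x, y, e). (X (x, y, e), y))"

definition K :: "real \<times> real \<times> real \<Rightarrow> real" where
  "K = (\<lambda>(x, y, e). inverse (p x))"

text \<open>After multiplication by p, the first component of the transformed field is
  \<open>e * eps_coeff + y * y_coeff\<close>.\<close>

definition eps_coeff :: "real \<times> real \<times> real \<Rightarrow> real" where
  "eps_coeff v = p (fst v) * pdiff [(1, 0, 0)] X v * f v"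

definition y_coeff :: "real \<times> real \<times> real \<Rightarrow> real" where
  "y_coeff v = p (fst v) * pdiff [(0, 1, 0)] X v * h v"

definition f0 :: "real \<times> real \<Rightarrow> real" where
  "f0 = (\<lambda>(Z, e). eps_coeff (\<xi> (Z, 0, e), 0, e))"

definition g0 :: "real \<times> real \<times> real \<Rightarrow> real" where
  "g0 w = y_coeff (\<xi> w, snd w) + snd (snd w) * hadamard_quotient (\<lambda>w. eps_coeff (\<xi> w, snd w)) w"

definition A :: "(real \<times> real) set" where
  "A = {(Z, e). (Z, 0, e) \<in> slab l u \<eta>}"

lemma smooth_fst: "open S \<Longrightarrow> smooth_on S (\<lambda>v::real \<times> real \<times> real. fst v)"
  by (intro smooth_on_linear) (simp_all add: linear_iff)

lemma smooth_X: "smooth_on UNIV X"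
proof -
  have "smooth_on UNIV (\<lambda>v. - h v * p (fst v))"
    by (intro smooth_on_mult smooth_on_uminus smooth_h smooth_on_compose[OF smooth_p]
        smooth_on_compose[OF smooth_p]) (auto simp: smooth_map_on_real_iff smooth_fst)
  then show ?thesis
    by (rule smooth_on_cong) (simp add: X_eq)
qed

lemma smooth_coeffs: "smooth_on UNIV eps_coeff" "smooth_on UNIV y_coeff"
  unfolding eps_coeff_def y_coeff_def
  by (intro smooth_on_mult smooth_on_compose[OF smooth_p] smooth_on_pdiff[OF smooth_X] smooth_f smooth_h;
      simp add: smooth_map_on_real_iff smooth_fst Basis_real3)+

lemma smooth_on_pullback:
  assumes "smooth_on UNIV F"
  shows "smooth_on (slab l u \<eta>) (\<lambda>w. F (\<xi> w, snd w))"
proof (rule smooth_on_compose[OF assms])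
  show "smooth_map_on (slab l u \<eta>) (\<lambda>w. (\<xi> w, snd w))"
    using smooth_\<xi> smooth_map_on_linear[OF open_slab linear_snd]
    by (simp add: smooth_map_on_Pair smooth_map_on_real_iff)
qed simp

lemma smooth_f0: "smooth_on A f0"
proof -
  have "open A"
  proof -
    have "A = (\<lambda>z. (fst z, 0, snd z)) -` slab l u \<eta>" by (auto simp: A_def)
    then show ?thesis
      by (simp only:) (intro open_vimage open_slab continuous_intros)
  qed
  then have "smooth_map_on A (\<lambda>z. (fst z, 0, snd z))"
    unfolding smooth_map_on_Pair
    by (intro conjI smooth_map_on_linear smooth_map_on_const linear_fst linear_snd)
  moreover have "(\<lambda>z. (fst z, 0, snd z)) ` A \<subseteq> slab l u \<eta>"
    by (auto simp: A_def)
  ultimately have "smooth_on A (\<lambda>z. eps_coeff (\<xi> (fst z, 0, snd z), snd (fst z, 0::real, snd z)))"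
    by (rule smooth_on_compose[OF smooth_on_pullback[OF smooth_coeffs(1)]])
  then show ?thesis
    by (simp add: f0_def case_prod_unfold)
qed

lemma smooth_g0: "smooth_on (slab l u \<eta>) g0"
  unfolding g0_def
  by (intro smooth_on_add smooth_on_mult smooth_on_pullback smooth_coeffs smooth_on_linear open_slab
      smooth_on_hadamard_quotient slab_scale_second) (simp_all add: linear_iff)

lemma g0_origin: "(0, 0, 0) \<in> slab l u \<eta>" "g0 (0, 0, 0) = 0"
proof -
  have x0: "a1 < x0" "x0 < b1" using zero(1) a1_less b1_greater by auto
  have "X (x0, 0, 0) = 0" using zero(2) by (simp add: X_eq)
  then show "(0, 0, 0) \<in> slab l u \<eta>" "g0 (0, 0, 0) = 0"
    using straighten[OF x0, of 0 0] \<eta>_pos zero(2) by (simp_all add: g0_def y_coeff_def)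
qed


lemma open_U: "open U"
proof -
  have "U = {z. a1 < fst z \<and> fst z < b1 \<and> \<bar>snd z\<bar> < \<eta>}" by (auto simp: U_def)
  then show ?thesis
    by (simp only:) (intro open_Collect_conj open_Collect_less continuous_intros)
qed

lemma segment_subset_U: "{a..b} \<times> {0} \<subseteq> U"
  using a1_less b1_greater \<eta>_pos by (auto simp: U_def)

lemma parameter_domain_eq: "{(x, y, e). (x, y) \<in> U \<and> e \<in> {-\<eta><..<\<eta>}} = slab a1 b1 \<eta>"
  by (auto simp: U_def slab_def)

lemma smooth_\<Phi>: "smooth_map_on (slab a1 b1 \<eta>) \<Phi>"
proof -
  have "smooth_map_on (slab a1 b1 \<eta>) (\<lambda>v::real \<times> real \<times> real. fst (snd v))"
    by (intro smooth_map_on_linear open_slab) (simp add: linear_iff)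
  then show ?thesis
    using smooth_on_subset[OF smooth_X subset_UNIV open_slab]
    by (simp add: \<Phi>_def case_prod_unfold smooth_map_on_Pair smooth_map_on_real_iff)
qed

lemma smooth_K: "smooth_on (slab a1 b1 \<eta>) K"
proof -
  have "smooth_on (slab a1 b1 \<eta>) (\<lambda>v. inverse (p (fst v)))"
    by (intro smooth_on_inverse smooth_on_compose[OF smooth_p])
      (simp_all add: smooth_map_on_real_iff smooth_fst open_slab less_imp_neq[OF p_pos, symmetric])
  then show ?thesis
    by (simp add: K_def case_prod_unfold)
qed

lemma diffeo_\<Phi>:
  assumes "\<bar>e\<bar> < \<eta>"
  shows "diffeo_on U (\<lambda>(x, y). \<Phi> (x, y, e))"
proof -
  have "diffeo_on U (\<lambda>(x, y). (X (x, y, e), y))"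
    using smooth_X open_U smooth_\<xi> by (rule diffeo_on_straighten) (use straighten assms in \<open>auto simp: U_def\<close>)
  then show ?thesis
    by (simp add: \<Phi>_def)
qed

lemma transformed_vector_field:
  assumes "(x, y) \<in> U" "\<bar>e\<bar> < \<eta>"
  shows "K (x, y, e) > 0 \<and>
    (let (Z, Y) = \<Phi> (x, y, e) in
      (Z, e) \<in> A \<and> (Z, Y, e) \<in> slab l u \<eta> \<and>
      (\<exists>D. ((\<lambda>(x', y'). \<Phi> (x', y', e)) has_derivative D) (at (x, y)) \<and>
        D (e * f (x, y, e), y * h (x, y, e)) =
          K (x, y, e) *\<^sub>R (e * f0 (Z, e) + Y * g0 (Z, Y, e), - Z * Y)))"
proof -
  define Z where "Z = X (x, y, e)"
  define Q where "Q = hadamard_quotient (\<lambda>w. eps_coeff (\<xi> w, snd w)) (Z, y, e)"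
  define Xx Xy where "Xx = pdiff [(1, 0, 0)] X (x, y, e)" and "Xy = pdiff [(0, 1, 0)] X (x, y, e)"
  have w: "(Z, y, e) \<in> slab l u \<eta>" "\<xi> (Z, y, e) = x"
    using straighten assms by (auto simp: U_def Z_def)
  have "(Z, 0, e) \<in> slab l u \<eta>" using slab_scale_second[OF w(1), of 0] by simp
  \<comment> \<open>Hadamard's lemma moves the Y-dependence of \<open>eps_coeff\<close> into \<open>g0\<close>.\<close>
  have "eps_coeff (x, y, e) = f0 (Z, e) + y * Q"
    using hadamard_decomposition[OF smooth_on_pullback[OF smooth_coeffs(1)] slab_scale_second w(1)] w(2)
    by (simp add: f0_def Q_def)
  then have "e * f0 (Z, e) + y * g0 (Z, y, e) = p x * (e * f (x, y, e) * Xx + y * h (x, y, e) * Xy)"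
    by (simp add: g0_def w(2) Q_def eps_coeff_def y_coeff_def Xx_def Xy_def algebra_simps)
  moreover have "- Z * y = p x * (y * h (x, y, e))"
    by (simp add: Z_def X_eq)
  ultimately have "(e * f (x, y, e) * Xx + y * h (x, y, e) * Xy, y * h (x, y, e))
      = K (x, y, e) *\<^sub>R (e * f0 (Z, e) + y * g0 (Z, y, e), - Z * y)"
    using p_pos[of x] by (simp add: K_def field_simps)
  moreover have "((\<lambda>(x', y'). \<Phi> (x', y', e)) has_derivative (\<lambda>(s, t). (s * Xx + t * Xy, t))) (at (x, y))"
    using has_derivative_straighten[OF smooth_X] by (simp add: \<Phi>_def Xx_def Xy_def)
  ultimately show ?thesis
    using w(1) \<open>(Z, 0, e) \<in> slab l u \<eta>\<close> p_pos[of x]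
    by (auto simp: \<Phi>_def K_def A_def Z_def algebra_simps)
qed

lemma normal_form_slice:
  assumes "e \<in> {0..<\<eta>}"
  shows "diffeo_on U (\<lambda>(x, y). \<Phi> (x, y, e)) \<and>
    (\<forall>(x, y)\<in>U.
      K (x, y, e) > 0 \<and>
      (let (Z, Y) = \<Phi> (x, y, e) in
        (Z, e) \<in> A \<and> (Z, Y, e) \<in> slab l u \<eta> \<and>
        (\<exists>D. ((\<lambda>(x', y'). \<Phi> (x', y', e)) has_derivative D) (at (x, y)) \<and>
          D (e * f (x, y, e), y * h (x, y, e)) =
            K (x, y, e) *\<^sub>R (e * f0 (Z, e) + Y * g0 (Z, Y, e), - Z * Y))))"
proof -
  have "\<bar>e\<bar> < \<eta>" using assms by auto
  then show ?thesis using diffeo_\<Phi> transformed_vector_field by blast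
qed

lemma normal_form:
  "\<exists>\<epsilon>0 > 0. \<exists>U :: (real \<times> real) set. \<exists>\<Phi> :: real \<times> real \<times> real \<Rightarrow> real \<times> real.
     \<exists>K :: real \<times> real \<times> real \<Rightarrow> real.
     \<exists>f0 :: real \<times> real \<Rightarrow> real. \<exists>g0 :: real \<times> real \<times> real \<Rightarrow> real.
     \<exists>A :: (real \<times> real) set. \<exists>B :: (real \<times> real \<times> real) set.
       open U \<and> {a..b} \<times> {0} \<subseteq> U \<and>
       smooth_map_on {(x, y, e). (x, y) \<in> U \<and> e \<in> {-\<epsilon>0<..<\<epsilon>0}} \<Phi> \<and>
       smooth_on {(x, y, e). (x, y) \<in> U \<and> e \<in> {-\<epsilon>0<..<\<epsilon>0}} K \<and>
       smooth_on A f0 \<and> smooth_on B g0 \<and> (0, 0, 0) \<in> B \<and> g0 (0, 0, 0) = 0 \<and>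
       (\<forall>e\<in>{0..<\<epsilon>0}.
          diffeo_on U (\<lambda>(x, y). \<Phi> (x, y, e)) \<and>
          (\<forall>(x, y)\<in>U.
             K (x, y, e) > 0 \<and>
             (let (X, Y) = \<Phi> (x, y, e) in
               (X, e) \<in> A \<and> (X, Y, e) \<in> B \<and>
               (\<exists>D. ((\<lambda>(x', y'). \<Phi> (x', y', e)) has_derivative D) (at (x, y)) \<and>
                    D (e * f (x, y, e), y * h (x, y, e)) =
                      K (x, y, e) *\<^sub>R (e * f0 (X, e) + Y * g0 (X, Y, e), - X * Y)))))"
  by (rule exI[of _ \<eta>], rule conjI[OF \<eta>_pos], rule exI[of _ U], rule exI[of _ \<Phi>], rule exI[of _ K],
      rule exI[of _ f0], rule exI[of _ g0], rule exI[of _ A], rule exI[of _ "slab l u \<eta>"],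
      unfold parameter_domain_eq, intro conjI)
    (use open_U segment_subset_U smooth_\<Phi> smooth_K smooth_f0 smooth_g0 g0_origin normal_form_slice in blast)+

end

theorem lemma2p1:
  fixes f h :: "real \<times> real \<times> real \<Rightarrow> real" and a b :: real
  assumes "a < 0" and "0 < b"
    and "smooth_on UNIV f" and "smooth_on UNIV h"
    and "\<forall>x\<in>{a..b} - {0}. x * h (x, 0, 0) < 0"
    and "\<exists>d < 0. ((\<lambda>x. h (x, 0, 0)) has_real_derivative d) (at 0)"
  shows "\<exists>\<epsilon>0 > 0. \<exists>U :: (real \<times> real) set. \<exists>\<Phi> :: real \<times> real \<times> real \<Rightarrow> real \<times> real.
     \<exists>K :: real \<times> real \<times> real \<Rightarrow> real.
     \<exists>f0 :: real \<times> real \<Rightarrow> real. \<exists>g0 :: real \<times> real \<times> real \<Rightarrow> real.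
     \<exists>A :: (real \<times> real) set. \<exists>B :: (real \<times> real \<times> real) set.
       open U \<and> {a..b} \<times> {0} \<subseteq> U \<and>
       smooth_map_on {(x, y, e). (x, y) \<in> U \<and> e \<in> {-\<epsilon>0<..<\<epsilon>0}} \<Phi> \<and>
       smooth_on {(x, y, e). (x, y) \<in> U \<and> e \<in> {-\<epsilon>0<..<\<epsilon>0}} K \<and>
       smooth_on A f0 \<and> smooth_on B g0 \<and> (0, 0, 0) \<in> B \<and> g0 (0, 0, 0) = 0 \<and>
       (\<forall>e\<in>{0..<\<epsilon>0}.
          diffeo_on U (\<lambda>(x, y). \<Phi> (x, y, e)) \<and>
          (\<forall>(x, y)\<in>U.
             K (x, y, e) > 0 \<and>
             (let (X, Y) = \<Phi> (x, y, e) in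
               (X, e) \<in> A \<and> (X, Y, e) \<in> B \<and>
               (\<exists>D. ((\<lambda>(x', y'). \<Phi> (x', y', e)) has_derivative D) (at (x, y)) \<and>
                    D (e * f (x, y, e), y * h (x, y, e)) =
                      K (x, y, e) *\<^sub>R (e * f0 (X, e) + Y * g0 (X, Y, e), - X * Y)))))"
proof -
  obtain n where n: "\<And>x. x \<in> {a..b} \<Longrightarrow> pdiff [(1, 0, 0)] (\<lambda>v. - h v * (1 + (fst v)\<^sup>2) ^ Suc n) (x, 0, 0) > 0"
    using exists_weight_exponent[OF assms(4,5)] assms(6) by blast
  define p where "p = (\<lambda>x::real. (1 + x\<^sup>2) ^ Suc n)"
  define X where "X = (\<lambda>v. - h v * p (fst v))"
  have p_pos: "p x > 0" for x
    unfolding p_def by (intro zero_less_power add_pos_nonneg) auto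
  have smooth_p: "smooth_on UNIV p"
    unfolding p_def by (intro smooth_on_power smooth_on_add smooth_on_const smooth_on_linear) (auto simp: linear_iff)
  have smooth_X: "smooth_on UNIV X"
    unfolding X_def using assms(4) smooth_on_linear[OF open_UNIV linear_fst]
    by (intro smooth_on_mult smooth_on_uminus smooth_on_compose[OF smooth_p]) (auto simp: smooth_map_on_real_iff)
  have "a \<le> b" using assms(1,2) by simp
  have pos: "pdiff [(1, 0, 0)] X (x, 0, 0) > 0" if "x \<in> {a..b}" for x
    using n[OF that] by (simp add: X_def p_def)
  obtain \<eta> a1 b1 l u \<xi> where "\<eta> > 0" "a1 < a" "b < b1" "smooth_on (slab l u \<eta>) \<xi>"
    "\<And>x y e. a1 < x \<Longrightarrow> x < b1 \<Longrightarrow> \<bar>y\<bar> < \<eta> \<Longrightarrow> \<bar>e\<bar> < \<eta> \<Longrightarrow>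
       (X (x, y, e), y, e) \<in> slab l u \<eta> \<and> \<xi> (X (x, y, e), y, e) = x"
    using straightening_neighbourhood[OF smooth_X \<open>a \<le> b\<close> pos] by blast
  moreover have "continuous_on {a..b} (\<lambda>x. h (x, 0, 0))"
    by (rule continuous_on_compose2[OF smooth_on_continuous_on[OF assms(4)]]) (auto intro!: continuous_intros)
  then obtain x0 where "x0 \<in> {a..b}" "h (x0, 0, 0) = 0"
    using zero_of_sign_change assms(1,2,5) by blast
  ultimately interpret straightened_slow_fast f h X p a b \<eta> a1 b1 l u x0 \<xi>
    using assms(3,4) smooth_p p_pos by unfold_locales (simp_all add: X_def)
  show ?thesis by (rule normal_form)
qed

end
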